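(* Let $\Omega$ be a verification operator for $|\Psi\rangle$, $N\ge1$ an integer, and $\delta_{\mathrm c}$ as defined in the context. Then: (1) $\zeta(N,\delta,\Omega)$ is convex and nondecreasing in $\delta$ for $0\le\delta\le1$ and strictly increasing for $\delta_{\mathrm c}\le\delta\le1$; (2) $\eta(N,f,\Omega)$ is concave and strictly increasing in $f$ for $0\le f\le1$; (3) $F(N,\delta,\Omega)$ is nondecreasing in $\delta$ for $0<\delta\le1$ and strictly increasing for $\delta_{\mathrm c}\le\delta\le1$; (4) $\mathcal F(N,f,\Omega)$ is strictly increasing in $f$ for $0<f\le1$.
   Context: Let $\mathcal H$ be a Hilbert space of finite dimension $D\ge2$ and $|\Psi\rangle\in\mathcal H$ a unit vector. A verification operator for $|\Psi\rangle$ is a Hermitian operator $\Omega$ on $\mathcal H$ with $0\le\Omega\le1$, $\Omega|\Psi\rangle=|\Psi\rangle$, whose eigenvalue $1$ is nondegenerate; $\beta$ and $\tau$ denote its second largest and smallest eigenvalues. Let $\delta_{\mathrm c}=\beta^N$ if $\tau>0$ and $\delta_{\mathrm c}=\max\{\beta^N,1/(N+1)\}$ if $\tau=0$. For a density operator $\rho$ on $\mathcal H^{\otimes(N+1)}$ put $p_\rho=\mathrm{tr}[(\Omega^{\otimes N}\otimes1)\rho]$, $f_\rho=\mathrm{tr}[(\Omega^{\otimes N}\otimes|\Psi\rangle\langle\Psi|)\rho]$. With optimization over permutation-invariant density operators on $\mathcal H^{\otimes(N+1)}$: $\zeta(N,\delta,\Omega)=\min\{f_\rho:p_\rho\ge\delta\}$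 ($0\le\delta\le1$), $\eta(N,f,\Omega)=\max\{p_\rho:f_\rho\le f\}$ ($0\le f\le1$), $F(N,\delta,\Omega)=\min\{f_\rho/p_\rho:p_\rho\ge\delta\}$ ($0<\delta\le1$), $\mathcal F(N,f,\Omega)=\min\{f_\rho/p_\rho:f_\rho\ge f\}$ ($0<f\le1$). *)

theory Defs
  imports "HOL-Analysis.Convex" "Jordan_Normal_Form.Char_Poly" "HOL-Combinatorics.Permutations"
begin

definition qform :: "complex mat \<Rightarrow> complex vec \<Rightarrow> complex" where
  "qform A v = (\<Sum>i<dim_vec v. \<Sum>j<dim_vec v. cnj (vec_index v i) * index_mat A (i, j) * vec_index v j)"

definition is_unit_vec :: "nat \<Rightarrow> complex vec \<Rightarrow> bool" where
  "is_unit_vec D v \<longleftrightarrow> v \<in> carrier_vec D \<and> (\<Sum>i<D. (cmod (vec_index v i))\<^sup>2) = 1"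

definition hermitian_mat :: "nat \<Rightarrow> complex mat \<Rightarrow> bool" where
  "hermitian_mat D A \<longleftrightarrow> A \<in> carrier_mat D D \<and>
     (\<forall>i<D. \<forall>j<D. index_mat A (j, i) = cnj (index_mat A (i, j)))"

definition verification_operator :: "nat \<Rightarrow> complex mat \<Rightarrow> complex vec \<Rightarrow> bool" where
  "verification_operator D \<Omega> \<Psi> \<longleftrightarrow>
     hermitian_mat D \<Omega> \<and>
     (\<forall>v \<in> carrier_vec D. 0 \<le> Re (qform \<Omega> v) \<and> Re (qform \<Omega> v) \<le> Re (qform (1\<^sub>m D) v)) \<and>
     \<Omega> *\<^sub>v \<Psi> = \<Psi> \<and>
     (\<forall>v \<in> carrier_vec D. \<Omega> *\<^sub>v v = v \<longrightarrow> (\<exists>c. v = c \<cdot>\<^sub>v \<Psi>))"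

definition beta_ev :: "complex mat \<Rightarrow> real" where
  "beta_ev \<Omega> = Max (Re ` {k. eigenvalue \<Omega> k \<and> k \<noteq> 1})"

definition tau_ev :: "complex mat \<Rightarrow> real" where
  "tau_ev \<Omega> = Min (Re ` {k. eigenvalue \<Omega> k})"

definition delta_c :: "nat \<Rightarrow> complex mat \<Rightarrow> real" where
  "delta_c N \<Omega> = (if tau_ev \<Omega> > 0 then beta_ev \<Omega> ^ N
                    else max (beta_ev \<Omega> ^ N) (1 / real (N + 1)))"

text \<open>The tensor power H^{\<otimes> n}: basis indexed by lists of length n with entries < D;
operators on it are kernels on these index lists.\<close>
definition idx :: "nat \<Rightarrow> nat \<Rightarrow> nat list set" where
  "idx n D = {xs. length xs = n \<and> set xs \<subseteq> {..<D}}"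

type_synonym op_n = "nat list \<Rightarrow> nat list \<Rightarrow> complex"

definition density_op :: "nat \<Rightarrow> nat \<Rightarrow> op_n \<Rightarrow> bool" where
  "density_op n D \<rho> \<longleftrightarrow>
     (\<forall>xs\<in>idx n D. \<forall>ys\<in>idx n D. \<rho> ys xs = cnj (\<rho> xs ys)) \<and>
     (\<forall>v :: nat list \<Rightarrow> complex.
        0 \<le> Re (\<Sum>xs\<in>idx n D. \<Sum>ys\<in>idx n D. cnj (v xs) * \<rho> xs ys * v ys)) \<and>
     (\<Sum>xs\<in>idx n D. \<rho> xs xs) = 1"

definition perm_idx :: "(nat \<Rightarrow> nat) \<Rightarrow> nat list \<Rightarrow> nat list" where
  "perm_idx \<sigma> xs = map (\<lambda>i. xs ! \<sigma> i) [0..<length xs]"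

definition perm_invariant :: "nat \<Rightarrow> nat \<Rightarrow> op_n \<Rightarrow> bool" where
  "perm_invariant n D \<rho> \<longleftrightarrow>
     (\<forall>\<sigma>. \<sigma> permutes {..<n} \<longrightarrow>
        (\<forall>xs\<in>idx n D. \<forall>ys\<in>idx n D. \<rho> (perm_idx \<sigma> xs) (perm_idx \<sigma> ys) = \<rho> xs ys))"

definition PI_states :: "nat \<Rightarrow> nat \<Rightarrow> op_n set" where
  "PI_states n D = {\<rho>. density_op n D \<rho> \<and> perm_invariant n D \<rho>}"

text \<open>Kernel of Omega^{\<otimes> N} \<otimes> B on H^{\<otimes>(N+1)}.\<close>
definition tensor_last :: "nat \<Rightarrow> complex mat \<Rightarrow> complex mat \<Rightarrow> op_n" where
  "tensor_last N \<Omega> B xs ys =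
     (\<Prod>i<N. index_mat \<Omega> (xs ! i, ys ! i)) * index_mat B (xs ! N, ys ! N)"

definition trace_prod :: "nat \<Rightarrow> nat \<Rightarrow> op_n \<Rightarrow> op_n \<Rightarrow> complex" where
  "trace_prod n D A \<rho> = (\<Sum>xs\<in>idx n D. \<Sum>ys\<in>idx n D. A xs ys * \<rho> ys xs)"

definition proj :: "complex vec \<Rightarrow> complex mat" where
  "proj \<Psi> = mat (dim_vec \<Psi>) (dim_vec \<Psi>) (\<lambda>(i, j). vec_index \<Psi> i * cnj (vec_index \<Psi> j))"

definition p_val :: "nat \<Rightarrow> complex mat \<Rightarrow> complex vec \<Rightarrow> op_n \<Rightarrow> real" where
  "p_val N \<Omega> \<Psi> \<rho> =
     Re (trace_prod (N + 1) (dim_vec \<Psi>) (tensor_last N \<Omega> (1\<^sub>m (dim_vec \<Psi>))) \<rho>)"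

definition f_val :: "nat \<Rightarrow> complex mat \<Rightarrow> complex vec \<Rightarrow> op_n \<Rightarrow> real" where
  "f_val N \<Omega> \<Psi> \<rho> = Re (trace_prod (N + 1) (dim_vec \<Psi>) (tensor_last N \<Omega> (proj \<Psi>)) \<rho>)"

definition zeta :: "nat \<Rightarrow> real \<Rightarrow> complex mat \<Rightarrow> complex vec \<Rightarrow> real" where
  "zeta N \<delta> \<Omega> \<Psi> = Inf {f_val N \<Omega> \<Psi> \<rho> | \<rho>. \<rho> \<in> PI_states (N + 1) (dim_vec \<Psi>) \<and> p_val N \<Omega> \<Psi> \<rho> \<ge> \<delta>}"

definition eta :: "nat \<Rightarrow> real \<Rightarrow> complex mat \<Rightarrow> complex vec \<Rightarrow> real" where
  "eta N f \<Omega> \<Psi> = Sup {p_val N \<Omega> \<Psi> \<rho> | \<rho>. \<rho> \<in> PI_states (N + 1) (dim_vec \<Psi>) \<and> f_val N \<Omega> \<Psi> \<rho> \<le> f}"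

definition Fid :: "nat \<Rightarrow> real \<Rightarrow> complex mat \<Rightarrow> complex vec \<Rightarrow> real" where
  "Fid N \<delta> \<Omega> \<Psi> = Inf {f_val N \<Omega> \<Psi> \<rho> / p_val N \<Omega> \<Psi> \<rho> | \<rho>. \<rho> \<in> PI_states (N + 1) (dim_vec \<Psi>) \<and> p_val N \<Omega> \<Psi> \<rho> \<ge> \<delta>}"

definition Fid' :: "nat \<Rightarrow> real \<Rightarrow> complex mat \<Rightarrow> complex vec \<Rightarrow> real" where
  "Fid' N f \<Omega> \<Psi> = Inf {f_val N \<Omega> \<Psi> \<rho> / p_val N \<Omega> \<Psi> \<rho> | \<rho>. \<rho> \<in> PI_states (N + 1) (dim_vec \<Psi>) \<and> f_val N \<Omega> \<Psi> \<rho> \<ge> f}"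

end

theory Submission
  imports Defs "Jordan_Normal_Form.Spectral_Radius"
begin

(* Write Omega = sum_j lambda_j |u_j><u_j| in an orthonormal eigenbasis with u_0 = Psi.  For a
   permutation-invariant state rho the diagonal entries w(a) = <u_a|rho|u_a>, a in {0..M-1}^(N+1),
   form a permutation-invariant probability distribution, and p_rho, f_rho are the expectations of
   prod_{i<N} lambda_{a_i} and of the same product restricted to a_N = 0.  Averaging over which
   factor plays the role of the last one gives the linear bounds p <= delta_c + C f and
   1 - f <= C' (1 - p).  Mixtures of permutation-invariant states are permutation invariant, so
   the pairs (p_rho, f_rho) form a convex set containing (1,1) and (delta_c,0).  Convexity of zeta
   and concavity of eta follow by mixing optimal states; zeta vanishes at delta_c and is positive
   beyond it by the first bound, eta stays below 1 for f < 1 by the second, and the strict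
   monotonicity statements follow by comparing with chords through (0,0), (delta_c,0) and (1,1). *)

section \<open>Optimization over a convex set of pass and fidelity values\<close>

locale pass_fidelity_region =
  fixes S :: "'a set" and p f :: "'a \<Rightarrow> real" and \<delta>\<^sub>c :: real
  assumes convex_pairs: "convex ((\<lambda>x. (p x, f x)) ` S)"
    and f_nonneg: "\<And>x. x \<in> S \<Longrightarrow> 0 \<le> f x"
    and f_le_p: "\<And>x. x \<in> S \<Longrightarrow> f x \<le> p x"
    and p_le_1: "\<And>x. x \<in> S \<Longrightarrow> p x \<le> 1"
    and perfect_state: "\<exists>x\<in>S. p x = 1 \<and> f x = 1"
    and critical_state: "\<exists>x\<in>S. p x = \<delta>\<^sub>c \<and> f x = 0"
    and critical_pos: "0 < \<delta>\<^sub>c"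
    and pass_bound: "\<exists>C>0. \<forall>x\<in>S. p x \<le> \<delta>\<^sub>c + C * f x"
    and fidelity_bound: "\<exists>C>0. \<forall>x\<in>S. 1 - f x \<le> C * (1 - p x)"
begin

definition min_fidelity :: "real \<Rightarrow> real" where
  "min_fidelity \<delta> = Inf {f x |x. x \<in> S \<and> p x \<ge> \<delta>}"

definition max_pass :: "real \<Rightarrow> real" where
  "max_pass \<phi> = Sup {p x |x. x \<in> S \<and> f x \<le> \<phi>}"

definition min_cond_fidelity :: "real \<Rightarrow> real" where
  "min_cond_fidelity \<delta> = Inf {f x / p x |x. x \<in> S \<and> p x \<ge> \<delta>}"

definition min_cond_fidelity' :: "real \<Rightarrow> real" where
  "min_cond_fidelity' \<phi> = Inf {f x / p x |x. x \<in> S \<and> f x \<ge> \<phi>}"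

lemma mixture_exists:
  assumes "x \<in> S" "y \<in> S" "0 \<le> t" "t \<le> 1"
  shows "\<exists>z\<in>S. p z = t * p x + (1 - t) * p y \<and> f z = t * f x + (1 - t) * f y"
proof -
  have "t *\<^sub>R (p x, f x) + (1 - t) *\<^sub>R (p y, f y) \<in> (\<lambda>x. (p x, f x)) ` S"
    using assms by (intro convexD[OF convex_pairs]) auto
  then show ?thesis by auto
qed

lemma p_nonneg: "x \<in> S \<Longrightarrow> 0 \<le> p x"
  using f_nonneg f_le_p by (metis order.trans)

lemma critical_le_1: "\<delta>\<^sub>c \<le> 1"
  using critical_state p_le_1 by auto

lemma min_fidelity_le: "x \<in> S \<Longrightarrow> \<delta> \<le> p x \<Longrightarrow> min_fidelity \<delta> \<le> f x"
  unfolding min_fidelity_def by (rule cInf_lower) (auto intro!: bdd_belowI[of _ 0] f_nonneg)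

lemma min_fidelity_greatest:
  "\<delta> \<le> 1 \<Longrightarrow> (\<And>x. x \<in> S \<Longrightarrow> \<delta> \<le> p x \<Longrightarrow> c \<le> f x) \<Longrightarrow> c \<le> min_fidelity \<delta>"
  unfolding min_fidelity_def by (rule cInf_greatest) (use perfect_state in auto)

lemma min_fidelity_approx:
  assumes "\<delta> \<le> 1" "0 < e"
  obtains x where "x \<in> S" "\<delta> \<le> p x" "f x < min_fidelity \<delta> + e"
proof -
  have "{f x |x. x \<in> S \<and> p x \<ge> \<delta>} \<noteq> {}" using perfect_state assms by auto
  from cInf_lessD[OF this, of "min_fidelity \<delta> + e"] show ?thesis
    using assms that unfolding min_fidelity_def by auto
qed

lemma min_fidelity_nonneg: "\<delta> \<le> 1 \<Longrightarrow> 0 \<le> min_fidelity \<delta>"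
  by (rule min_fidelity_greatest) (auto intro: f_nonneg)

lemma min_fidelity_eq_0: "\<delta> \<le> \<delta>\<^sub>c \<Longrightarrow> min_fidelity \<delta> = 0"
  using critical_state min_fidelity_le min_fidelity_nonneg critical_le_1
  by (metis order.antisym order.trans)

lemma min_fidelity_mono: "a \<le> b \<Longrightarrow> b \<le> 1 \<Longrightarrow> min_fidelity a \<le> min_fidelity b"
  by (rule min_fidelity_greatest) (auto intro: min_fidelity_le)

lemma min_fidelity_pos:
  assumes "\<delta>\<^sub>c < \<delta>" "\<delta> \<le> 1"
  shows "0 < min_fidelity \<delta>"
proof -
  obtain C where C: "0 < C" "\<And>x. x \<in> S \<Longrightarrow> p x \<le> \<delta>\<^sub>c + C * f x"
    using pass_bound by blast
  have "(\<delta> - \<delta>\<^sub>c) / C \<le> min_fidelity \<delta>"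
  proof (rule min_fidelity_greatest[OF assms(2)])
    fix x assume "x \<in> S" "\<delta> \<le> p x"
    with C(2)[of x] C(1) show "(\<delta> - \<delta>\<^sub>c) / C \<le> f x" by (simp add: field_simps)
  qed
  moreover have "0 < (\<delta> - \<delta>\<^sub>c) / C" using assms C(1) by simp
  ultimately show ?thesis by linarith
qed

lemma min_fidelity_convex_comb:
  assumes "a \<le> 1" "b \<le> 1" "0 \<le> t" "t \<le> 1"
  shows "min_fidelity (t * a + (1 - t) * b) \<le> t * min_fidelity a + (1 - t) * min_fidelity b"
proof (rule field_le_epsilon)
  fix e :: real assume "0 < e"
  obtain x where x: "x \<in> S" "a \<le> p x" "f x < min_fidelity a + e"
    using min_fidelity_approx[OF assms(1) \<open>0 < e\<close>] .
  obtain y where y: "y \<in> S" "b \<le> p y" "f y < min_fidelity b + e"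
    using min_fidelity_approx[OF assms(2) \<open>0 < e\<close>] .
  obtain z where z: "z \<in> S" "p z = t * p x + (1 - t) * p y" "f z = t * f x + (1 - t) * f y"
    using mixture_exists[OF x(1) y(1) assms(3,4)] by blast
  have "t * a + (1 - t) * b \<le> p z"
    unfolding z(2) using x y assms by (intro add_mono mult_left_mono) auto
  then have "min_fidelity (t * a + (1 - t) * b) \<le> f z" by (rule min_fidelity_le[OF z(1)])
  also have "\<dots> \<le> t * (min_fidelity a + e) + (1 - t) * (min_fidelity b + e)"
    unfolding z(3) using x y assms by (intro add_mono mult_left_mono) auto
  finally show "min_fidelity (t * a + (1 - t) * b) \<le> t * min_fidelity a + (1 - t) * min_fidelity b + e"
    by (simp add: algebra_simps)
qed

lemma min_fidelity_le_chord:
  assumes "\<delta>\<^sub>0 \<le> \<delta>\<^sub>c" "\<delta>\<^sub>0 \<le> a" "a \<le> b" "\<delta>\<^sub>0 < b" "b \<le> 1"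
  shows "min_fidelity a \<le> (a - \<delta>\<^sub>0) / (b - \<delta>\<^sub>0) * min_fidelity b"
proof -
  define t where "t = (a - \<delta>\<^sub>0) / (b - \<delta>\<^sub>0)"
  have t: "0 \<le> t" "t \<le> 1" using assms unfolding t_def by (auto simp: field_simps)
  have "t * (b - \<delta>\<^sub>0) = a - \<delta>\<^sub>0" using assms unfolding t_def by simp
  then have "t * b + (1 - t) * \<delta>\<^sub>0 = a" by (simp add: algebra_simps)
  then have "min_fidelity a \<le> t * min_fidelity b + (1 - t) * min_fidelity \<delta>\<^sub>0"
    using min_fidelity_convex_comb[of b \<delta>\<^sub>0 t] t assms critical_le_1 by simp
  then show ?thesis using min_fidelity_eq_0[OF assms(1)] unfolding t_def by simp
qed

lemma min_cond_fidelity_eq: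
  assumes "0 < \<delta>" "\<delta> \<le> 1"
  shows "min_cond_fidelity \<delta> = min_fidelity \<delta> / \<delta>"
proof (rule antisym)
  have nonempty: "{f x / p x |x. x \<in> S \<and> p x \<ge> \<delta>} \<noteq> {}" using perfect_state assms by auto
  show "min_fidelity \<delta> / \<delta> \<le> min_cond_fidelity \<delta>"
    unfolding min_cond_fidelity_def
  proof (rule cInf_greatest[OF nonempty], clarify)
    fix x assume x: "x \<in> S" "\<delta> \<le> p x"
    have px: "0 < p x" "p x \<le> 1" using x assms p_le_1 by auto
    have "min_fidelity \<delta> \<le> \<delta> / p x * min_fidelity (p x)"
      using min_fidelity_le_chord[of 0 \<delta> "p x"] x px assms critical_pos by simp
    also have "\<dots> \<le> \<delta> / p x * f x"
      using min_fidelity_le[OF x(1), of "p x"] assms px by (intro mult_left_mono) auto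
    finally show "min_fidelity \<delta> / \<delta> \<le> f x / p x" using assms px by (simp add: field_simps)
  qed
  show "min_cond_fidelity \<delta> \<le> min_fidelity \<delta> / \<delta>"
  proof (rule field_le_epsilon)
    fix e :: real assume "0 < e"
    obtain x where x: "x \<in> S" "\<delta> \<le> p x" "f x < min_fidelity \<delta> + e * \<delta>"
      using min_fidelity_approx[OF assms(2), of "e * \<delta>"] \<open>0 < e\<close> assms by auto
    have "min_cond_fidelity \<delta> \<le> f x / p x"
      unfolding min_cond_fidelity_def using x
      by (intro cInf_lower) (auto intro!: bdd_belowI[of _ 0] divide_nonneg_nonneg f_nonneg p_nonneg)
    also have "\<dots> \<le> f x / \<delta>" using x assms f_nonneg by (intro divide_left_mono) auto
    also have "\<dots> \<le> (min_fidelity \<delta> + e * \<delta>) / \<delta>" using x assms by (intro divide_right_mono) auto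
    also have "\<dots> = min_fidelity \<delta> / \<delta> + e" using assms by (simp add: field_simps)
    finally show "min_cond_fidelity \<delta> \<le> min_fidelity \<delta> / \<delta> + e" .
  qed
qed

lemma max_pass_ge: "x \<in> S \<Longrightarrow> f x \<le> \<phi> \<Longrightarrow> p x \<le> max_pass \<phi>"
  unfolding max_pass_def by (rule cSup_upper) (auto intro!: bdd_aboveI[of _ 1] p_le_1)

lemma max_pass_least:
  "0 \<le> \<phi> \<Longrightarrow> (\<And>x. x \<in> S \<Longrightarrow> f x \<le> \<phi> \<Longrightarrow> p x \<le> c) \<Longrightarrow> max_pass \<phi> \<le> c"
  unfolding max_pass_def by (rule cSup_least) (use critical_state in auto)

lemma max_pass_approx:
  assumes "0 \<le> \<phi>" "0 < e"
  obtains x where "x \<in> S" "f x \<le> \<phi>" "max_pass \<phi> - e < p x"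
proof -
  have "{p x |x. x \<in> S \<and> f x \<le> \<phi>} \<noteq> {}" using critical_state assms by auto
  from less_cSupD[OF this, of "max_pass \<phi> - e"] show ?thesis
    using assms that unfolding max_pass_def by auto
qed

lemma max_pass_ge_critical: "0 \<le> \<phi> \<Longrightarrow> \<delta>\<^sub>c \<le> max_pass \<phi>"
  using critical_state max_pass_ge by fastforce

lemma max_pass_pos: "0 \<le> \<phi> \<Longrightarrow> 0 < max_pass \<phi>"
  using max_pass_ge_critical critical_pos by fastforce

lemma max_pass_1: "max_pass 1 = 1"
  using perfect_state max_pass_ge max_pass_least[of 1 1] p_le_1 by (metis order.antisym order_refl zero_le_one)

lemma max_pass_lt_1:
  assumes "0 \<le> \<phi>" "\<phi> < 1"
  shows "max_pass \<phi> < 1"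
proof -
  obtain C where C: "0 < C" "\<And>x. x \<in> S \<Longrightarrow> 1 - f x \<le> C * (1 - p x)"
    using fidelity_bound by blast
  have "max_pass \<phi> \<le> 1 - (1 - \<phi>) / C"
  proof (rule max_pass_least[OF assms(1)])
    fix x assume "x \<in> S" "f x \<le> \<phi>"
    with C(2)[of x] C(1) show "p x \<le> 1 - (1 - \<phi>) / C" by (simp add: field_simps)
  qed
  moreover have "0 < (1 - \<phi>) / C" using assms C(1) by simp
  ultimately show ?thesis by linarith
qed

lemma max_pass_concave_comb:
  assumes "0 \<le> a" "0 \<le> b" "0 \<le> t" "t \<le> 1"
  shows "t * max_pass a + (1 - t) * max_pass b \<le> max_pass (t * a + (1 - t) * b)"
proof (rule field_le_epsilon)
  fix e :: real assume "0 < e"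
  obtain x where x: "x \<in> S" "f x \<le> a" "max_pass a - e < p x"
    using max_pass_approx[OF assms(1) \<open>0 < e\<close>] .
  obtain y where y: "y \<in> S" "f y \<le> b" "max_pass b - e < p y"
    using max_pass_approx[OF assms(2) \<open>0 < e\<close>] .
  obtain z where z: "z \<in> S" "p z = t * p x + (1 - t) * p y" "f z = t * f x + (1 - t) * f y"
    using mixture_exists[OF x(1) y(1) assms(3,4)] by blast
  have "f z \<le> t * a + (1 - t) * b"
    unfolding z(3) using x y assms by (intro add_mono mult_left_mono) auto
  then have "p z \<le> max_pass (t * a + (1 - t) * b)" by (rule max_pass_ge[OF z(1)])
  moreover have "t * (max_pass a - e) + (1 - t) * (max_pass b - e) \<le> p z"
    unfolding z(2) using x y assms by (intro add_mono mult_left_mono) auto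
  ultimately show "t * max_pass a + (1 - t) * max_pass b \<le> max_pass (t * a + (1 - t) * b) + e"
    by (simp add: algebra_simps)
qed

lemma max_pass_above_chord:
  assumes "0 < a" "a \<le> b"
  shows "a / b * max_pass b + (1 - a / b) * max_pass 0 \<le> max_pass a"
  using max_pass_concave_comb[of b 0 "a / b"] assms by simp

text \<open>Obtained by mixing x with the perfect state.\<close>
lemma raise_fidelity:
  assumes "x \<in> S" "f x \<le> \<phi>" "\<phi> \<le> 1"
  obtains z where "z \<in> S" "f z = \<phi>" "p x \<le> p z"
proof -
  obtain x1 where x1: "x1 \<in> S" "p x1 = 1" "f x1 = 1" using perfect_state by blast
  show ?thesis
  proof (cases "f x = 1")
    case True
    then show ?thesis using that assms by force
  next
    case False
    then have fx: "f x < 1" using assms by simp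
    define t where "t = (1 - \<phi>) / (1 - f x)"
    have t: "0 \<le> t" "t \<le> 1" using fx assms unfolding t_def by (auto simp: field_simps)
    obtain z where z: "z \<in> S" "p z = t * p x + (1 - t) * p x1" "f z = t * f x + (1 - t) * f x1"
      using mixture_exists[OF assms(1) x1(1) t] by blast
    have "t * (1 - f x) = 1 - \<phi>" unfolding t_def using fx by simp
    then have "f z = \<phi>" unfolding z(3) x1 by (simp add: algebra_simps)
    moreover have "p x \<le> p z"
      unfolding z(2) x1 using t p_le_1[OF assms(1)] mult_left_mono[of "p x" 1 "1 - t"]
      by (simp add: algebra_simps)
    ultimately show ?thesis using that z(1) by blast
  qed
qed

lemma min_cond_fidelity'_eq:
  assumes "0 < \<phi>" "\<phi> \<le> 1"
  shows "min_cond_fidelity' \<phi> = \<phi> / max_pass \<phi>"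
proof (rule antisym)
  have nonempty: "{f x / p x |x. x \<in> S \<and> f x \<ge> \<phi>} \<noteq> {}" using perfect_state assms by auto
  have pass_pos: "0 < max_pass \<phi>" using max_pass_pos assms by simp
  show lower: "\<phi> / max_pass \<phi> \<le> min_cond_fidelity' \<phi>"
    unfolding min_cond_fidelity'_def
  proof (rule cInf_greatest[OF nonempty], clarify)
    fix x assume x: "x \<in> S" "\<phi> \<le> f x"
    have fx: "0 < f x" "f x \<le> p x" using x assms f_le_p by auto
    have "\<phi> / f x * p x \<le> \<phi> / f x * max_pass (f x)"
      using max_pass_ge[OF x(1)] fx assms by (intro mult_left_mono) auto
    also have "\<dots> \<le> max_pass \<phi>"
    proof -
      have "0 \<le> (1 - \<phi> / f x) * max_pass 0"
        using max_pass_pos[of 0] x(2) fx by (intro mult_nonneg_nonneg) auto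
      then show ?thesis using max_pass_above_chord[OF assms(1) x(2)] by linarith
    qed
    finally show "\<phi> / max_pass \<phi> \<le> f x / p x" using fx pass_pos assms by (simp add: field_simps)
  qed
  have ratio_pos: "0 < min_cond_fidelity' \<phi>"
    using lower pass_pos assms by (smt (verit) divide_pos_pos)
  have "max_pass \<phi> \<le> \<phi> / min_cond_fidelity' \<phi>"
  proof (rule max_pass_least)
    fix x assume x: "x \<in> S" "f x \<le> \<phi>"
    obtain z where z: "z \<in> S" "f z = \<phi>" "p x \<le> p z" using raise_fidelity[OF x assms(2)] .
    have pz: "0 < p z" using z f_le_p assms by force
    have "min_cond_fidelity' \<phi> \<le> \<phi> / p z"
      unfolding min_cond_fidelity'_def using z
      by (intro cInf_lower) (auto intro!: bdd_belowI[of _ 0] divide_nonneg_nonneg f_nonneg p_nonneg)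
    then have "p z \<le> \<phi> / min_cond_fidelity' \<phi>" using pz ratio_pos by (simp add: field_simps)
    then show "p x \<le> \<phi> / min_cond_fidelity' \<phi>" using z(3) by linarith
  qed (use assms in simp)
  then show "min_cond_fidelity' \<phi> \<le> \<phi> / max_pass \<phi>"
    using ratio_pos pass_pos by (simp add: field_simps)
qed

lemma convex_min_fidelity: "convex_on {0..1} min_fidelity"
proof (rule convex_onI)
  fix t x y :: real assume "0 < t" "t < 1" "x \<in> {0..1}" "y \<in> {0..1}"
  then show "min_fidelity ((1 - t) *\<^sub>R x + t *\<^sub>R y) \<le> (1 - t) * min_fidelity x + t * min_fidelity y"
    using min_fidelity_convex_comb[of x y "1 - t"] by simp
qed (rule convex_real_interval)

lemma mono_min_fidelity: "mono_on {0..1} min_fidelity"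
  by (rule mono_onI) (auto intro: min_fidelity_mono)

lemma strict_mono_min_fidelity: "strict_mono_on {\<delta>\<^sub>c..1} min_fidelity"
proof (rule strict_mono_onI)
  fix a b :: real assume ab: "a \<in> {\<delta>\<^sub>c..1}" "b \<in> {\<delta>\<^sub>c..1}" "a < b"
  have "min_fidelity a \<le> (a - \<delta>\<^sub>c) / (b - \<delta>\<^sub>c) * min_fidelity b"
    using min_fidelity_le_chord ab by auto
  also have "\<dots> < 1 * min_fidelity b"
    using min_fidelity_pos[of b] ab by (intro mult_strict_right_mono) (auto simp: field_simps)
  finally show "min_fidelity a < min_fidelity b" by simp
qed

lemma concave_max_pass: "concave_on {0..1} max_pass"
  unfolding concave_on_def
proof (rule convex_onI)
  fix t x y :: real assume "0 < t" "t < 1" "x \<in> {0..1}" "y \<in> {0..1}"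
  then show "- max_pass ((1 - t) *\<^sub>R x + t *\<^sub>R y) \<le> (1 - t) * - max_pass x + t * - max_pass y"
    using max_pass_concave_comb[of x y "1 - t"] by simp
qed (rule convex_real_interval)

lemma strict_mono_max_pass: "strict_mono_on {0..1} max_pass"
proof (rule strict_mono_onI)
  fix a b :: real assume ab: "a \<in> {0..1}" "b \<in> {0..1}" "a < b"
  define t where "t = (1 - b) / (1 - a)"
  have t: "0 \<le> t" "t < 1" using ab unfolding t_def by (auto simp: field_simps)
  have "t * (1 - a) = 1 - b" using ab unfolding t_def by simp
  then have b: "t * a + (1 - t) * 1 = b" by (simp add: algebra_simps)
  have "max_pass a < t * max_pass a + (1 - t) * 1"
    using max_pass_lt_1[of a] ab t mult_strict_left_mono[of "max_pass a" 1 "1 - t"]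
    by (simp add: algebra_simps)
  also have "\<dots> \<le> max_pass b"
    using max_pass_concave_comb[of a 1 t] ab t unfolding b by (simp add: max_pass_1)
  finally show "max_pass a < max_pass b" .
qed

lemma mono_min_cond_fidelity: "mono_on {0<..1} min_cond_fidelity"
proof (rule mono_onI)
  fix a b :: real assume ab: "a \<in> {0<..1}" "b \<in> {0<..1}" "a \<le> b"
  have "min_fidelity a \<le> a / b * min_fidelity b"
    using min_fidelity_le_chord[of 0 a b] ab critical_pos by simp
  then show "min_cond_fidelity a \<le> min_cond_fidelity b"
    using ab by (simp add: min_cond_fidelity_eq field_simps)
qed

lemma strict_mono_min_cond_fidelity: "strict_mono_on {\<delta>\<^sub>c..1} min_cond_fidelity"
proof (rule strict_mono_onI)
  fix a b :: real assume ab: "a \<in> {\<delta>\<^sub>c..1}" "b \<in> {\<delta>\<^sub>c..1}" "a < b"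
  have a: "0 < a" using ab critical_pos by auto
  have "min_fidelity a / a \<le> (a - \<delta>\<^sub>c) / (b - \<delta>\<^sub>c) * min_fidelity b / a"
    using min_fidelity_le_chord[of \<delta>\<^sub>c a b] ab a by (intro divide_right_mono) auto
  also have "\<dots> = (a - \<delta>\<^sub>c) / (a * (b - \<delta>\<^sub>c)) * min_fidelity b" by simp
  also have "\<dots> < 1 / b * min_fidelity b"
  proof (rule mult_strict_right_mono)
    have "(a - \<delta>\<^sub>c) * b < a * (b - \<delta>\<^sub>c)" using ab critical_pos by (simp add: algebra_simps)
    then show "(a - \<delta>\<^sub>c) / (a * (b - \<delta>\<^sub>c)) < 1 / b" using ab a by (simp add: field_simps)
  qed (use min_fidelity_pos ab in auto)
  finally show "min_cond_fidelity a < min_cond_fidelity b"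
    using ab a by (simp add: min_cond_fidelity_eq)
qed

lemma strict_mono_min_cond_fidelity': "strict_mono_on {0<..1} min_cond_fidelity'"
proof (rule strict_mono_onI)
  fix a b :: real assume ab: "a \<in> {0<..1}" "b \<in> {0<..1}" "a < b"
  have "0 < (1 - a / b) * max_pass 0" using ab max_pass_pos[of 0] by simp
  then have "a / b * max_pass b < max_pass a" using max_pass_above_chord[of a b] ab by simp
  then have "a / max_pass a < b / max_pass b" using max_pass_pos ab by (simp add: field_simps)
  then show "min_cond_fidelity' a < min_cond_fidelity' b" using ab by (simp add: min_cond_fidelity'_eq)
qed

end

section \<open>Orthonormal eigenbases of Hermitian matrices\<close>

definition braket :: "nat \<Rightarrow> (nat \<Rightarrow> complex) \<Rightarrow> (nat \<Rightarrow> complex) \<Rightarrow> complex" where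
  "braket D u v = (\<Sum>x<D. cnj (u x) * v x)"

definition mat_apply :: "complex mat \<Rightarrow> nat \<Rightarrow> (nat \<Rightarrow> complex) \<Rightarrow> nat \<Rightarrow> complex" where
  "mat_apply A D u x = (\<Sum>y<D. A $$ (x, y) * u y)"

definition orthonormal :: "nat \<Rightarrow> nat \<Rightarrow> (nat \<Rightarrow> nat \<Rightarrow> complex) \<Rightarrow> bool" where
  "orthonormal D m u \<longleftrightarrow> (\<forall>j<m. \<forall>k<m. braket D (u j) (u k) = (if j = k then 1 else 0))"

definition resolves_identity :: "nat \<Rightarrow> nat \<Rightarrow> (nat \<Rightarrow> nat \<Rightarrow> complex) \<Rightarrow> bool" where
  "resolves_identity D m u \<longleftrightarrow>
     (\<forall>x<D. \<forall>y<D. (\<Sum>j<m. u j x * cnj (u j y)) = (if x = y then 1 else 0))"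

definition is_eigenfun :: "complex mat \<Rightarrow> nat \<Rightarrow> (nat \<Rightarrow> complex) \<Rightarrow> bool" where
  "is_eigenfun A D w \<longleftrightarrow> (\<exists>\<mu>. \<forall>x<D. mat_apply A D w x = \<mu> * w x)"

lemma braket_cnj: "cnj (braket D u v) = braket D v u"
  unfolding braket_def by (simp add: mult.commute)

lemma braket_sum_right: "braket D u (\<lambda>x. \<Sum>j\<in>J. c j * v j x) = (\<Sum>j\<in>J. c j * braket D u (v j))"
  unfolding braket_def by (simp add: sum_distrib_left sum_distrib_right mult_ac sum.swap[of _ J])

lemma braket_sum_left:
  "braket D (\<lambda>x. \<Sum>j\<in>J. c j * v j x) u = (\<Sum>j\<in>J. cnj (c j) * braket D (v j) u)"
proof -
  have "braket D (\<lambda>x. \<Sum>j\<in>J. c j * v j x) u = cnj (braket D u (\<lambda>x. \<Sum>j\<in>J. c j * v j x))"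
    by (simp add: braket_cnj)
  also have "\<dots> = (\<Sum>j\<in>J. cnj (c j) * braket D (v j) u)" by (simp add: braket_sum_right braket_cnj)
  finally show ?thesis .
qed

lemma braket_scale_right: "braket D u (\<lambda>x. c * v x) = c * braket D u v"
  unfolding braket_def by (simp add: sum_distrib_left mult_ac)

lemma braket_scale_left: "braket D (\<lambda>x. c * u x) v = cnj c * braket D u v"
  unfolding braket_def by (simp add: sum_distrib_left mult_ac)

lemma braket_diff:
  "braket D (\<lambda>y. a y - b y) (\<lambda>y. c y - d y) = braket D a c - braket D a d - braket D b c + braket D b d"
  unfolding braket_def by (simp add: algebra_simps sum_subtractf sum.distrib)

lemma braket_cong:
  "(\<And>x. x < D \<Longrightarrow> u x = u' x) \<Longrightarrow> (\<And>x. x < D \<Longrightarrow> v x = v' x) \<Longrightarrow> braket D u v = braket D u' v'"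
  unfolding braket_def by (intro sum.cong) auto

lemma braket_self: "braket D w w = of_real (\<Sum>y<D. (cmod (w y))\<^sup>2)"
  unfolding braket_def of_real_sum complex_norm_square by (rule sum.cong) (auto simp: mult.commute)

lemma braket_self_nonneg: "0 \<le> Re (braket D w w)"
  unfolding braket_self by (simp add: sum_nonneg)

lemma braket_self_pos: assumes "x < D" "w x \<noteq> 0" shows "0 < Re (braket D w w)"
proof -
  have "(cmod (w x))\<^sup>2 \<le> (\<Sum>y<D. (cmod (w y))\<^sup>2)" using assms by (intro member_le_sum) auto
  moreover have "0 < (cmod (w x))\<^sup>2" using assms by simp
  ultimately have "0 < (\<Sum>y<D. (cmod (w y))\<^sup>2)" by linarith
  then show ?thesis unfolding braket_self by simp
qed

lemma braket_orthonormal_sum: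
  assumes "orthonormal D m u" "k < m"
  shows "braket D (u k) (\<lambda>x. \<Sum>j<m. c j * u j x) = c k"
proof -
  have "braket D (u k) (\<lambda>x. \<Sum>j<m. c j * u j x) = (\<Sum>j<m. if j = k then c j else 0)"
    unfolding braket_sum_right using assms unfolding orthonormal_def by (intro sum.cong) auto
  then show ?thesis using assms by simp
qed

lemma resolves_identity_expansion:
  assumes "resolves_identity D m u" "x < D"
  shows "(\<Sum>j<m. braket D (u j) w * u j x) = w x"
proof -
  have "(\<Sum>j<m. braket D (u j) w * u j x) = (\<Sum>y<D. w y * (\<Sum>j<m. u j x * cnj (u j y)))"
    unfolding braket_def
    by (simp add: sum_distrib_left sum_distrib_right mult_ac sum.swap[of _ "{..<m}"])
  also have "\<dots> = (\<Sum>y<D. if y = x then w y else 0)"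
    using assms unfolding resolves_identity_def by (intro sum.cong) auto
  finally show ?thesis using assms by simp
qed

lemma resolves_identity_eqI:
  assumes "resolves_identity D m u" "\<And>j. j < m \<Longrightarrow> braket D (u j) v = braket D (u j) w" "x < D"
  shows "v x = w x"
  using resolves_identity_expansion[OF assms(1,3), of v] resolves_identity_expansion[OF assms(1,3), of w]
    assms(2) by simp

lemma bessel_inequality:
  assumes "orthonormal D m u" "x < D"
  shows "(\<Sum>j<m. (cmod (u j x))\<^sup>2) \<le> 1"
proof -
  define e where "e = (\<lambda>y::nat. if y = x then (1::complex) else 0)"
  define P where "P = (\<lambda>y. \<Sum>j<m. cnj (u j x) * u j y)"
  define s where "s = (\<Sum>j<m. u j x * cnj (u j x))"
  have ee: "braket D e e = 1"
  proof -
    have "braket D e e = (\<Sum>y<D. if y = x then 1 else 0)"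
      unfolding braket_def e_def by (rule sum.cong) auto
    then show ?thesis using assms by simp
  qed
  have eP: "braket D e P = s"
  proof -
    have "braket D e P = (\<Sum>y<D. if y = x then P y else 0)"
      unfolding braket_def e_def by (rule sum.cong) auto
    then show ?thesis using assms unfolding P_def s_def by (simp add: mult.commute)
  qed
  have PP: "braket D P P = s"
  proof -
    have "braket D P P = (\<Sum>j<m. cnj (cnj (u j x)) * braket D (u j) P)"
      unfolding P_def by (rule braket_sum_left)
    also have "\<dots> = s"
      unfolding s_def P_def using braket_orthonormal_sum[OF assms(1)] by (intro sum.cong) auto
    finally show ?thesis .
  qed
  have "braket D (\<lambda>y. e y - P y) (\<lambda>y. e y - P y) = 1 - cnj s"
    unfolding braket_diff ee eP PP braket_cnj[of D e P, symmetric] by simp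
  moreover have "s = of_real (\<Sum>j<m. (cmod (u j x))\<^sup>2)"
    unfolding s_def of_real_sum complex_norm_square ..
  ultimately show ?thesis using braket_self_nonneg[of D "\<lambda>y. e y - P y"] by simp
qed

lemma orthonormal_le_dim:
  assumes "orthonormal D m u"
  shows "m \<le> D"
proof -
  have "real m = (\<Sum>j<m. Re (braket D (u j) (u j)))" using assms unfolding orthonormal_def by simp
  also have "\<dots> = (\<Sum>x<D. \<Sum>j<m. (cmod (u j x))\<^sup>2)" unfolding braket_self by (simp add: sum.swap[of _ "{..<m}"])
  also have "\<dots> \<le> (\<Sum>x<D. 1)" using bessel_inequality[OF assms] by (intro sum_mono) auto
  finally show ?thesis by simp
qed

lemma orthonormal_extend:
  assumes "orthonormal D m u" "\<And>k. k < m \<Longrightarrow> braket D (u k) v = 0" "braket D v v = 1"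
  shows "orthonormal D (Suc m) (u(m := v))"
  unfolding orthonormal_def
proof (intro allI impI)
  fix j k assume "j < Suc m" "k < Suc m"
  then show "braket D ((u(m := v)) j) ((u(m := v)) k) = (if j = k then 1 else 0)"
    using assms braket_cnj[of D "u k" v] unfolding orthonormal_def
    by (cases "j = m"; cases "k = m") auto
qed

lemma normalize_nonzero:
  assumes "x < D" "w x \<noteq> 0"
  obtains c where "braket D (\<lambda>z. c * w z) (\<lambda>z. c * w z) = 1"
proof
  define r where "r = Re (braket D w w)"
  have r: "0 < r" unfolding r_def by (rule braket_self_pos[of x D w, OF assms])
  define c where "c = complex_of_real (1 / sqrt r)"
  have "braket D (\<lambda>z. c * w z) (\<lambda>z. c * w z) = cnj c * c * braket D w w"
    by (simp add: braket_scale_left braket_scale_right)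
  also have "braket D w w = of_real r" unfolding r_def braket_self by simp
  also have "cnj c * c * of_real r = of_real (1 / sqrt r * (1 / sqrt r) * r)"
    unfolding c_def by (simp only: complex_cnj_complex_of_real of_real_mult)
  also have "1 / sqrt r * (1 / sqrt r) * r = 1"
    using r real_sqrt_mult_self[of r] by (simp add: field_simps)
  finally show "braket D (\<lambda>z. c * w z) (\<lambda>z. c * w z) = 1" by simp
qed

lemma orthonormal_extend_one:
  assumes "orthonormal D m u" "\<not> resolves_identity D m u"
  obtains v where "orthonormal D (Suc m) (u(m := v))"
proof -
  obtain x y where xy: "x < D" "y < D" "(\<Sum>j<m. u j x * cnj (u j y)) \<noteq> (if x = y then 1 else 0)"
    using assms(2) unfolding resolves_identity_def by auto
  define w where "w = (\<lambda>z. (if z = y then 1 else 0) - (\<Sum>j<m. cnj (u j y) * u j z))"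
  have wx: "w x \<noteq> 0" using xy unfolding w_def by (auto simp: mult.commute)
  have orth: "braket D (u k) w = 0" if "k < m" for k
  proof -
    have "braket D (u k) (\<lambda>z. if z = y then 1 else 0) = cnj (u k y)"
      unfolding braket_def using xy by (simp add: if_distrib cong: if_cong)
    then show ?thesis
      using braket_orthonormal_sum[OF assms(1) that, of "\<lambda>j. cnj (u j y)"]
      unfolding w_def braket_def by (simp add: algebra_simps sum_subtractf)
  qed
  obtain c where "braket D (\<lambda>z. c * w z) (\<lambda>z. c * w z) = 1"
    using normalize_nonzero[of x D w, OF xy(1) wx] .
  then have "orthonormal D (Suc m) (u(m := (\<lambda>z. c * w z)))"
    using orthonormal_extend[OF assms(1)] orth by (simp add: braket_scale_right)
  then show ?thesis by (rule that)
qed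

text \<open>Terminates because orthonormal families in dimension D have at most D members.\<close>
lemma orthonormal_extension_terminates:
  assumes "\<And>m u. P m u \<Longrightarrow> orthonormal D m u"
    and "P m u"
    and "\<And>m u. P m u \<Longrightarrow> \<not> resolves_identity D m u \<Longrightarrow> \<exists>v. P (Suc m) (u(m := v))"
  shows "\<exists>m u. P m u \<and> resolves_identity D m u"
  using assms(2)
proof (induction "D - m" arbitrary: m u rule: less_induct)
  case less
  show ?case
  proof (cases "resolves_identity D m u")
    case False
    then obtain v where v: "P (Suc m) (u(m := v))" using assms(3) less.prems by blast
    then have "Suc m \<le> D" using orthonormal_le_dim assms(1) by blast
    then show ?thesis using less.hyps[OF _ v] by simp
  qed (use less.prems in blast)
qed

lemma orthonormal_completion:
  assumes "orthonormal D m u"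
  obtains m' u' where "m \<le> m'" "\<forall>j<m. u' j = u j" "orthonormal D m' u'" "resolves_identity D m' u'"
proof -
  have "\<exists>m' u'. (orthonormal D m' u' \<and> m \<le> m' \<and> (\<forall>j<m. u' j = u j)) \<and> resolves_identity D m' u'"
  proof (rule orthonormal_extension_terminates)
    fix m' u' assume "orthonormal D m' u' \<and> m \<le> m' \<and> (\<forall>j<m. u' j = u j)" "\<not> resolves_identity D m' u'"
    then show "\<exists>v. orthonormal D (Suc m') (u'(m' := v)) \<and> m \<le> Suc m' \<and> (\<forall>j<m. (u'(m' := v)) j = u j)"
      by (metis orthonormal_extend_one fun_upd_other le_SucI less_le_not_le)
  qed (use assms in auto)
  then show ?thesis using that by blast
qed

lemma mat_apply_sum: "mat_apply A D (\<lambda>z. \<Sum>j\<in>J. c j * v j z) x = (\<Sum>j\<in>J. c j * mat_apply A D (v j) x)"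
  unfolding mat_apply_def by (simp add: sum_distrib_left mult_ac sum.swap[of _ J])

lemma mat_apply_scale: "mat_apply A D (\<lambda>z. c * w z) x = c * mat_apply A D w x"
  unfolding mat_apply_def by (simp add: sum_distrib_left mult_ac)

lemma hermitian_mat_cnj: "hermitian_mat D A \<Longrightarrow> x < D \<Longrightarrow> y < D \<Longrightarrow> cnj (A $$ (y, x)) = A $$ (x, y)"
  unfolding hermitian_mat_def by (metis complex_cnj_cnj)

lemma hermitian_braket:
  assumes "hermitian_mat D A"
  shows "braket D u (mat_apply A D v) = braket D (mat_apply A D u) v"
proof -
  have "braket D (mat_apply A D u) v = (\<Sum>y<D. \<Sum>x<D. cnj (A $$ (y, x)) * cnj (u x) * v y)"
    unfolding braket_def mat_apply_def by (simp add: sum_distrib_right)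
  also have "\<dots> = (\<Sum>y<D. \<Sum>x<D. cnj (u x) * (A $$ (x, y) * v y))"
    by (intro sum.cong refl) (simp add: hermitian_mat_cnj[OF assms])
  also have "\<dots> = braket D u (mat_apply A D v)"
    unfolding braket_def mat_apply_def sum_distrib_left by (rule sum.swap)
  finally show ?thesis by simp
qed

lemma complex_mat_eigenvector_exists:
  fixes C :: "complex mat"
  assumes "C \<in> carrier_mat r r" "0 < r"
  obtains a c where "c \<in> carrier_vec r" "c \<noteq> 0\<^sub>v r" "C *\<^sub>v c = a \<cdot>\<^sub>v c"
  using spectrum_non_empty[OF assms] assms(1) that
  unfolding spectrum_def eigenvalue_def eigenvector_def by auto

lemma braket_orthonormal_shifted_sum:
  assumes "orthonormal D (m + r) u" "l < m + r"
  shows "braket D (u l) (\<lambda>x. \<Sum>i<r. c i * u (m + i) x) = (if m \<le> l then c (l - m) else 0)"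
proof -
  have "braket D (u l) (\<lambda>x. \<Sum>i<r. c i * u (m + i) x) = (\<Sum>i<r. if i = l - m \<and> m \<le> l then c i else 0)"
    unfolding braket_sum_right using assms unfolding orthonormal_def by (intro sum.cong) auto
  then show ?thesis using assms(2) by auto
qed

text \<open>The orthogonal complement of finitely many eigenvectors is invariant under a Hermitian
  matrix; an eigenvector of the compression of A to it is an eigenvector of A.\<close>
lemma hermitian_eigenfun_in_complement:
  assumes herm: "hermitian_mat D A"
    and on: "orthonormal D m' u" and res: "resolves_identity D m' u" and "m < m'"
    and eig: "\<And>j. j < m \<Longrightarrow> is_eigenfun A D (u j)"
  obtains v x where "is_eigenfun A D v" "\<forall>j<m. braket D (u j) v = 0" "x < D" "v x \<noteq> 0"
proof -
  define r where "r = m' - m"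
  have m': "m' = m + r" using \<open>m < m'\<close> unfolding r_def by simp
  define C where "C = mat r r (\<lambda>(i, k). braket D (u (m + i)) (mat_apply A D (u (m + k))))"
  have C: "C \<in> carrier_mat r r" unfolding C_def by simp
  have "0 < r" using \<open>m < m'\<close> unfolding r_def by simp
  then obtain a c where c: "c \<in> carrier_vec r" "c \<noteq> 0\<^sub>v r" "C *\<^sub>v c = a \<cdot>\<^sub>v c"
    by (rule complex_mat_eigenvector_exists[OF C])
  define v where "v = (\<lambda>x. \<Sum>i<r. c $ i * u (m + i) x)"
  have coeff: "braket D (u l) v = (if m \<le> l then c $ (l - m) else 0)" if "l < m'" for l
    unfolding v_def using braket_orthonormal_shifted_sum[of D m r u l] on that m' by simp
  have "braket D (u l) (mat_apply A D v) = braket D (u l) (\<lambda>x. a * v x)" if "l < m'" for l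
  proof (cases "m \<le> l")
    case True
    have "braket D (u l) (mat_apply A D v) = (\<Sum>i<r. C $$ (l - m, i) * c $ i)"
      unfolding v_def mat_apply_sum braket_sum_right C_def using True that m'
      by (intro sum.cong) (auto simp: mult.commute)
    also have "\<dots> = (C *\<^sub>v c) $ (l - m)"
      using True that c(1) C m' by (auto simp: scalar_prod_def atLeast0LessThan)
    finally show ?thesis using c(3) c(1) True that coeff m' by (simp add: braket_scale_right)
  next
    case False
    obtain \<mu> where \<mu>: "\<And>x. x < D \<Longrightarrow> mat_apply A D (u l) x = \<mu> * u l x"
      using eig[of l] False unfolding is_eigenfun_def by auto
    have "braket D (u l) (mat_apply A D v) = braket D (\<lambda>x. \<mu> * u l x) v"
      unfolding hermitian_braket[OF herm] by (rule braket_cong) (simp_all add: \<mu>)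
    then show ?thesis using coeff[OF that] False by (simp add: braket_scale_left braket_scale_right)
  qed
  then have "is_eigenfun A D v"
    unfolding is_eigenfun_def using resolves_identity_eqI[OF res] by blast
  moreover have "\<forall>j<m. braket D (u j) v = 0" using coeff \<open>m < m'\<close> by simp
  moreover obtain i where i: "i < r" "c $ i \<noteq> 0"
    using c(1,2) by (metis carrier_vecD eq_vecI index_zero_vec(1,2))
  then have "braket D (u (m + i)) v \<noteq> 0" using coeff[of "m + i"] m' by simp
  then obtain x where "x < D" "v x \<noteq> 0"
    unfolding braket_def by (metis (no_types, lifting) mult_zero_right sum.neutral lessThan_iff)
  ultimately show ?thesis using that by blast
qed

lemma hermitian_eigenfun_extend:
  assumes herm: "hermitian_mat D A" and on: "orthonormal D m u"
    and eig: "\<forall>j<m. is_eigenfun A D (u j)" and incomplete: "\<not> resolves_identity D m u"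
  obtains v where "orthonormal D (Suc m) (u(m := v))" "is_eigenfun A D v"
proof -
  obtain m' u' where u': "m \<le> m'" "\<forall>j<m. u' j = u j" "orthonormal D m' u'" "resolves_identity D m' u'"
    using on by (rule orthonormal_completion)
  have "m \<noteq> m'"
  proof
    assume "m = m'"
    then have "resolves_identity D m u" using u'(2,4) unfolding resolves_identity_def by simp
    then show False using incomplete by contradiction
  qed
  then have "m < m'" using u'(1) by simp
  moreover have "\<And>j. j < m \<Longrightarrow> is_eigenfun A D (u' j)" using eig u'(2) by simp
  ultimately obtain v x where v: "is_eigenfun A D v" "\<forall>j<m. braket D (u' j) v = 0" "x < D" "v x \<noteq> 0"
    by (rule hermitian_eigenfun_in_complement[OF herm u'(3,4)])
  obtain c where c: "braket D (\<lambda>z. c * v z) (\<lambda>z. c * v z) = 1"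
    using normalize_nonzero[of x D v, OF v(3,4)] .
  have "orthonormal D (Suc m) (u(m := (\<lambda>z. c * v z)))"
    using orthonormal_extend[OF on _ c] v(2) u'(2) by (simp add: braket_scale_right)
  moreover have "is_eigenfun A D (\<lambda>z. c * v z)"
    using v(1) unfolding is_eigenfun_def by (auto simp: mat_apply_scale)
  ultimately show ?thesis by (rule that)
qed

theorem hermitian_eigenbasis_extension:
  assumes herm: "hermitian_mat D A"
    and on: "orthonormal D m u" and eig: "\<And>j. j < m \<Longrightarrow> is_eigenfun A D (u j)"
  obtains m' u' where "m \<le> m'" "\<forall>j<m. u' j = u j" "orthonormal D m' u'"
    "resolves_identity D m' u'" "\<forall>j<m'. is_eigenfun A D (u' j)"
proof -
  let ?P = "\<lambda>m' u'. orthonormal D m' u' \<and> m \<le> m' \<and> (\<forall>j<m. u' j = u j) \<and> (\<forall>j<m'. is_eigenfun A D (u' j))"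
  have "\<exists>m' u'. ?P m' u' \<and> resolves_identity D m' u'"
  proof (rule orthonormal_extension_terminates[where m = m and u = u])
    show "?P m u" using on eig by simp
  next
    show "orthonormal D m' u'" if "?P m' u'" for m' u' using that by simp
  next
    fix m' u' assume P: "?P m' u'" and "\<not> resolves_identity D m' u'"
    then obtain v where "orthonormal D (Suc m') (u'(m' := v))" "is_eigenfun A D v"
      using hermitian_eigenfun_extend[OF herm] by blast
    then show "\<exists>v. ?P (Suc m') (u'(m' := v))"
      using P by (intro exI[of _ v]) (auto simp: less_Suc_eq)
  qed
  then obtain m' u' where "?P m' u'" "resolves_identity D m' u'" by blast
  then show ?thesis by (intro that) auto
qed

section \<open>States on tensor powers\<close>

lemma finite_idx [simp]: "finite (idx n D)"
  using finite_lists_length_eq[of "{..<D}" n] unfolding idx_def by (simp add: conj_commute)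

lemma idx_length: "xs \<in> idx n D \<Longrightarrow> length xs = n"
  unfolding idx_def by simp

lemma idx_nth: "xs \<in> idx n D \<Longrightarrow> i < n \<Longrightarrow> xs ! i < D"
proof -
  assume "xs \<in> idx n D" "i < n"
  then have "xs ! i \<in> set xs" "set xs \<subseteq> {..<D}" by (auto simp: idx_def)
  then show ?thesis by auto
qed

lemma idx_Suc: "idx (Suc n) D = (\<lambda>(a, j). a @ [j]) ` (idx n D \<times> {..<D})"
proof
  show "idx (Suc n) D \<subseteq> (\<lambda>(a, j). a @ [j]) ` (idx n D \<times> {..<D})"
  proof
    fix xs assume xs: "xs \<in> idx (Suc n) D"
    then obtain a j where "xs = a @ [j]"
      by (metis idx_length rev_exhaust list.size(3) nat.distinct(1))
    then show "xs \<in> (\<lambda>(a, j). a @ [j]) ` (idx n D \<times> {..<D})" using xs unfolding idx_def by force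
  qed
qed (auto simp: idx_def)

lemma prod_sum_eq_sum_idx:
  fixes g :: "nat \<Rightarrow> nat \<Rightarrow> 'c::comm_semiring_1"
  shows "(\<Prod>i<n. \<Sum>j<M. g i j) = (\<Sum>a\<in>idx n M. \<Prod>i<n. g i (a ! i))"
proof (induction n)
  case 0
  have "idx 0 M = {[]}" unfolding idx_def by auto
  then show ?case by simp
next
  case (Suc n)
  have "(\<Sum>a\<in>idx (Suc n) M. \<Prod>i<Suc n. g i (a ! i))
      = (\<Sum>(a, j)\<in>idx n M \<times> {..<M}. \<Prod>i<Suc n. g i ((a @ [j]) ! i))"
    unfolding idx_Suc by (subst sum.reindex) (auto intro!: inj_onI simp: case_prod_unfold)
  also have "\<dots> = (\<Sum>(a, j)\<in>idx n M \<times> {..<M}. (\<Prod>i<n. g i (a ! i)) * g n j)"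
    by (intro sum.cong refl) (auto simp: nth_append idx_length intro!: prod.cong)
  also have "\<dots> = (\<Sum>a\<in>idx n M. \<Prod>i<n. g i (a ! i)) * (\<Sum>j<M. g n j)"
    by (simp add: sum.cartesian_product[symmetric] sum_product)
  finally show ?case using Suc by simp
qed

lemma prod_double_sum_eq_sum_idx:
  fixes h :: "nat \<Rightarrow> nat \<Rightarrow> nat \<Rightarrow> 'c::comm_semiring_1"
  shows "(\<Prod>i<n. \<Sum>x<D. \<Sum>y<D. h i x y) = (\<Sum>xs\<in>idx n D. \<Sum>ys\<in>idx n D. \<Prod>i<n. h i (xs ! i) (ys ! i))"
  by (simp only: prod_sum_eq_sum_idx[of "\<lambda>i x. \<Sum>y<D. h i x y"] prod_sum_eq_sum_idx)

lemma prod_eq_indicator_idx: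
  assumes "xs \<in> idx n D" "ys \<in> idx n D"
  shows "(\<Prod>i<n. if xs ! i = ys ! i then 1 else 0 :: 'c::comm_semiring_1) = (if xs = ys then 1 else 0)"
proof (cases "xs = ys")
  case False
  then obtain i where "i < n" "xs ! i \<noteq> ys ! i"
    using assms nth_equalityI[of xs ys] by (auto simp: idx_length)
  then show ?thesis using False by (intro trans[OF prod_zero]) auto
qed simp

lemma sum_swap_outer: "(\<Sum>x\<in>A. \<Sum>y\<in>B. \<Sum>j\<in>J. F x y j) = (\<Sum>j\<in>J. \<Sum>x\<in>A. \<Sum>y\<in>B. F x y j)"
proof -
  have "(\<Sum>x\<in>A. \<Sum>y\<in>B. \<Sum>j\<in>J. F x y j) = (\<Sum>x\<in>A. \<Sum>j\<in>J. \<Sum>y\<in>B. F x y j)"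
    by (rule sum.cong[OF refl], rule sum.swap)
  also have "\<dots> = (\<Sum>j\<in>J. \<Sum>x\<in>A. \<Sum>y\<in>B. F x y j)" by (rule sum.swap)
  finally show ?thesis .
qed

definition prod_vec :: "nat \<Rightarrow> (nat \<Rightarrow> nat \<Rightarrow> complex) \<Rightarrow> nat list \<Rightarrow> complex" where
  "prod_vec n g xs = (\<Prod>i<n. g i (xs ! i))"

definition prod_state :: "nat \<Rightarrow> (nat \<Rightarrow> nat \<Rightarrow> complex) \<Rightarrow> op_n" where
  "prod_state n g xs ys = prod_vec n g xs * cnj (prod_vec n g ys)"

definition mixture :: "nat \<Rightarrow> (nat \<Rightarrow> real) \<Rightarrow> (nat \<Rightarrow> op_n) \<Rightarrow> op_n" where
  "mixture K c \<rho>s xs ys = (\<Sum>j<K. of_real (c j) * \<rho>s j xs ys)"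

lemma density_prod_state:
  assumes "\<And>i. i < n \<Longrightarrow> braket D (g i) (g i) = 1"
  shows "density_op n D (prod_state n g)"
  unfolding density_op_def
proof (intro conjI allI ballI)
  fix v :: "nat list \<Rightarrow> complex"
  define z where "z = (\<Sum>xs\<in>idx n D. cnj (v xs) * prod_vec n g xs)"
  have "(\<Sum>xs\<in>idx n D. \<Sum>ys\<in>idx n D. cnj (v xs) * prod_state n g xs ys * v ys) = z * cnj z"
    unfolding prod_state_def z_def sum_product cnj_sum
    by (intro sum.cong refl) (simp add: mult_ac)
  also have "\<dots> = of_real ((cmod z)\<^sup>2)" by (rule complex_norm_square[symmetric])
  finally show "0 \<le> Re (\<Sum>xs\<in>idx n D. \<Sum>ys\<in>idx n D. cnj (v xs) * prod_state n g xs ys * v ys)"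
    by simp
next
  have "(\<Sum>xs\<in>idx n D. prod_state n g xs xs) = (\<Prod>i<n. \<Sum>x<D. cnj (g i x) * g i x)"
    unfolding prod_state_def prod_vec_def prod_sum_eq_sum_idx
    by (simp add: prod.distrib cnj_prod mult.commute)
  also have "\<dots> = 1" using assms unfolding braket_def by simp
  finally show "(\<Sum>xs\<in>idx n D. prod_state n g xs xs) = 1" .
qed (simp add: prod_state_def)

lemma trace_tensor_last_prod_state:
  "trace_prod (Suc N) D (tensor_last N A B) (prod_state (Suc N) g)
     = (\<Prod>i<N. braket D (g i) (mat_apply A D (g i))) * braket D (g N) (mat_apply B D (g N))"
proof -
  let ?C = "\<lambda>i. if i < N then A else B"
  have "trace_prod (Suc N) D (tensor_last N A B) (prod_state (Suc N) g)
      = (\<Sum>xs\<in>idx (Suc N) D. \<Sum>ys\<in>idx (Suc N) D.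
           \<Prod>i<Suc N. ?C i $$ (xs ! i, ys ! i) * (g i (ys ! i) * cnj (g i (xs ! i))))"
    unfolding trace_prod_def tensor_last_def prod_state_def prod_vec_def
    by (intro sum.cong refl) (simp add: prod.distrib cnj_prod mult_ac)
  also have "\<dots> = (\<Prod>i<Suc N. \<Sum>x<D. \<Sum>y<D. ?C i $$ (x, y) * (g i y * cnj (g i x)))"
    by (rule prod_double_sum_eq_sum_idx[symmetric])
  also have "\<dots> = (\<Prod>i<Suc N. braket D (g i) (mat_apply (?C i) D (g i)))"
    unfolding braket_def mat_apply_def
    by (intro prod.cong sum.cong refl) (simp add: sum_distrib_left mult_ac)
  finally show ?thesis by simp
qed

lemma trace_prod_mixture:
  "trace_prod n D T (mixture K c \<rho>s) = (\<Sum>j<K. of_real (c j) * trace_prod n D T (\<rho>s j))"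
proof -
  have "trace_prod n D T (mixture K c \<rho>s)
      = (\<Sum>xs\<in>idx n D. \<Sum>ys\<in>idx n D. \<Sum>j<K. of_real (c j) * (T xs ys * \<rho>s j ys xs))"
    unfolding trace_prod_def mixture_def by (intro sum.cong refl) (simp add: sum_distrib_left mult_ac)
  also have "\<dots> = (\<Sum>j<K. \<Sum>xs\<in>idx n D. \<Sum>ys\<in>idx n D. of_real (c j) * (T xs ys * \<rho>s j ys xs))"
    by (rule sum_swap_outer)
  finally show ?thesis unfolding trace_prod_def by (simp add: sum_distrib_left)
qed

lemma density_mixture:
  assumes "\<And>j. j < K \<Longrightarrow> 0 \<le> c j" "(\<Sum>j<K. c j) = 1"
    and "\<And>j. j < K \<Longrightarrow> density_op n D (\<rho>s j)"
  shows "density_op n D (mixture K c \<rho>s)"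
  unfolding density_op_def
proof (intro conjI allI ballI)
  fix xs ys assume "xs \<in> idx n D" "ys \<in> idx n D"
  then have "\<rho>s j ys xs = cnj (\<rho>s j xs ys)" if "j < K" for j
    using assms(3)[OF that] unfolding density_op_def by blast
  then show "mixture K c \<rho>s ys xs = cnj (mixture K c \<rho>s xs ys)"
    unfolding mixture_def cnj_sum by (intro sum.cong refl) simp
next
  fix v :: "nat list \<Rightarrow> complex"
  let ?q = "\<lambda>\<rho>. \<Sum>xs\<in>idx n D. \<Sum>ys\<in>idx n D. cnj (v xs) * \<rho> xs ys * v ys"
  have "?q (mixture K c \<rho>s) = (\<Sum>xs\<in>idx n D. \<Sum>ys\<in>idx n D. \<Sum>j<K. of_real (c j) * (cnj (v xs) * \<rho>s j xs ys * v ys))"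
    unfolding mixture_def by (intro sum.cong refl) (simp add: sum_distrib_left sum_distrib_right mult_ac)
  also have "\<dots> = (\<Sum>j<K. \<Sum>xs\<in>idx n D. \<Sum>ys\<in>idx n D. of_real (c j) * (cnj (v xs) * \<rho>s j xs ys * v ys))"
    by (rule sum_swap_outer)
  also have "\<dots> = (\<Sum>j<K. of_real (c j) * ?q (\<rho>s j))" by (simp add: sum_distrib_left)
  finally have "Re (?q (mixture K c \<rho>s)) = (\<Sum>j<K. c j * Re (?q (\<rho>s j)))" by simp
  also have "0 \<le> \<dots>"
  proof (intro sum_nonneg mult_nonneg_nonneg)
    fix j assume "j \<in> {..<K}"
    then show "0 \<le> c j" using assms(1) by simp
    show "0 \<le> Re (?q (\<rho>s j))" using assms(3)[of j] \<open>j \<in> {..<K}\<close> unfolding density_op_def by blast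
  qed
  finally show "0 \<le> Re (?q (mixture K c \<rho>s))" .
next
  have "(\<Sum>xs\<in>idx n D. mixture K c \<rho>s xs xs) = (\<Sum>j<K. of_real (c j) * (\<Sum>xs\<in>idx n D. \<rho>s j xs xs))"
    unfolding mixture_def sum_distrib_left by (rule sum.swap)
  also have "\<dots> = of_real (\<Sum>j<K. c j)"
  proof -
    have "(\<Sum>xs\<in>idx n D. \<rho>s j xs xs) = 1" if "j < K" for j
      using assms(3)[OF that] unfolding density_op_def by blast
    then show ?thesis unfolding of_real_sum by simp
  qed
  finally show "(\<Sum>xs\<in>idx n D. mixture K c \<rho>s xs xs) = 1" using assms(2) by simp
qed

lemma length_perm_idx [simp]: "length (perm_idx \<sigma> xs) = length xs"
  unfolding perm_idx_def by simp

lemma nth_perm_idx [simp]: "i < length xs \<Longrightarrow> perm_idx \<sigma> xs ! i = xs ! \<sigma> i"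
  unfolding perm_idx_def by simp

lemma permutes_lessThan_less: "\<sigma> permutes {..<n} \<Longrightarrow> i < n \<Longrightarrow> \<sigma> i < n"
  by (metis lessThan_iff permutes_in_image)

lemma perm_idx_in_idx:
  assumes "\<sigma> permutes {..<n}" "xs \<in> idx n D"
  shows "perm_idx \<sigma> xs \<in> idx n D"
  using assms idx_nth[OF assms(2)] permutes_lessThan_less[OF assms(1)]
  by (auto simp: idx_def perm_idx_def)

lemma perm_idx_inv_perm_idx:
  assumes "\<sigma> permutes {..<n}" "length xs = n"
  shows "perm_idx (inv_into UNIV \<sigma>) (perm_idx \<sigma> xs) = xs" "perm_idx \<sigma> (perm_idx (inv_into UNIV \<sigma>) xs) = xs"
  using assms permutes_lessThan_less[OF assms(1)] permutes_lessThan_less[OF permutes_inv[OF assms(1)]]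
  by (auto intro!: nth_equalityI simp: permutes_inverses)

lemma sum_idx_perm_idx:
  assumes "\<sigma> permutes {..<n}"
  shows "(\<Sum>xs\<in>idx n D. F (perm_idx \<sigma> xs)) = (\<Sum>xs\<in>idx n D. F xs)"
  by (rule sum.reindex_bij_witness[of _ "perm_idx (inv_into UNIV \<sigma>)" "perm_idx \<sigma>"])
    (use perm_idx_inv_perm_idx[OF assms] perm_idx_in_idx[OF assms]
      perm_idx_in_idx[OF permutes_inv[OF assms]] idx_length in auto)

lemma prod_vec_perm_idx:
  assumes "\<sigma> permutes {..<n}" "length xs = n"
  shows "prod_vec n g (perm_idx \<sigma> xs) = prod_vec n (g \<circ> inv_into UNIV \<sigma>) xs"
proof -
  have "prod_vec n g (perm_idx \<sigma> xs) = (\<Prod>i<n. (\<lambda>k. (g \<circ> inv_into UNIV \<sigma>) k (xs ! k)) (\<sigma> i))"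
    unfolding prod_vec_def using assms by (intro prod.cong) (auto simp: permutes_inverses)
  also have "\<dots> = prod_vec n (g \<circ> inv_into UNIV \<sigma>) xs"
    unfolding prod_vec_def by (rule prod.permute[OF assms(1), unfolded comp_def, symmetric])
  finally show ?thesis .
qed

lemma perm_invariant_prod_state_const: "perm_invariant n D (prod_state n (\<lambda>_. v))"
  unfolding perm_invariant_def prod_state_def
  by (auto simp: prod_vec_perm_idx idx_length comp_def)

lemma perm_invariant_mixture:
  "(\<And>j. j < K \<Longrightarrow> perm_invariant n D (\<rho>s j)) \<Longrightarrow> perm_invariant n D (mixture K c \<rho>s)"
  unfolding perm_invariant_def mixture_def by simp

text \<open>Permuting the factors of the j-th product state gives the \<sigma> j-th one, so the uniform
  mixture is invariant.\<close>
lemma perm_invariant_symmetrized_prod_state: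
  "perm_invariant n D (mixture n (\<lambda>_. 1 / real n) (\<lambda>j. prod_state n (\<lambda>i. if i = j then z else w)))"
  unfolding perm_invariant_def
proof (intro allI impI ballI)
  fix \<sigma> xs ys assume \<sigma>: "\<sigma> permutes {..<n}" and "xs \<in> idx n D" "ys \<in> idx n D"
  define g :: "nat \<Rightarrow> nat \<Rightarrow> nat \<Rightarrow> complex" where "g j i = (if i = j then z else w)" for j i
  have g: "g j \<circ> inv_into UNIV \<sigma> = g (\<sigma> j)" for j
    unfolding g_def comp_def using \<sigma> by (auto simp: permutes_inverses fun_eq_iff)
  let ?t = "\<lambda>j. of_real (1 / real n) * prod_state n (g j) xs ys"
  have "mixture n (\<lambda>_. 1 / real n) (\<lambda>j. prod_state n (g j)) (perm_idx \<sigma> xs) (perm_idx \<sigma> ys)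
      = (\<Sum>j<n. ?t (\<sigma> j))"
    unfolding mixture_def prod_state_def
    using prod_vec_perm_idx[OF \<sigma>] idx_length \<open>xs \<in> idx n D\<close> \<open>ys \<in> idx n D\<close> g by simp
  also have "\<dots> = (\<Sum>j<n. ?t j)" by (rule sum.permute[OF \<sigma>, unfolded comp_def, symmetric])
  finally show "mixture n (\<lambda>_. 1 / real n) (\<lambda>j. prod_state n (\<lambda>i. if i = j then z else w)) (perm_idx \<sigma> xs) (perm_idx \<sigma> ys)
      = mixture n (\<lambda>_. 1 / real n) (\<lambda>j. prod_state n (\<lambda>i. if i = j then z else w)) xs ys"
    unfolding mixture_def g_def .
qed

lemma PI_states_convex_comb:
  assumes "\<rho> \<in> PI_states n D" "\<rho>' \<in> PI_states n D" "0 \<le> t" "t \<le> 1"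
  obtains \<rho>'' where "\<rho>'' \<in> PI_states n D"
    "\<And>T. trace_prod n D T \<rho>'' = of_real t * trace_prod n D T \<rho> + of_real (1 - t) * trace_prod n D T \<rho>'"
proof
  define c where "c j = (if j = 0 then t else 1 - t)" for j :: nat
  define \<rho>s where "\<rho>s j = (if j = 0 then \<rho> else \<rho>')" for j :: nat
  have "density_op n D (mixture 2 c \<rho>s)"
    using assms unfolding c_def \<rho>s_def PI_states_def
    by (intro density_mixture) (auto simp: numeral_2_eq_2 less_Suc_eq)
  moreover have "perm_invariant n D (mixture 2 c \<rho>s)"
    using assms unfolding \<rho>s_def PI_states_def by (intro perm_invariant_mixture) auto
  ultimately show "mixture 2 c \<rho>s \<in> PI_states n D" unfolding PI_states_def by simp
  show "trace_prod n D T (mixture 2 c \<rho>s) = of_real t * trace_prod n D T \<rho> + of_real (1 - t) * trace_prod n D T \<rho>'" for T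
    unfolding trace_prod_mixture by (simp add: numeral_2_eq_2 c_def \<rho>s_def)
qed

definition basis_weight :: "nat \<Rightarrow> nat \<Rightarrow> (nat \<Rightarrow> nat \<Rightarrow> complex) \<Rightarrow> op_n \<Rightarrow> nat list \<Rightarrow> complex" where
  "basis_weight n D u \<rho> a =
     (\<Sum>xs\<in>idx n D. \<Sum>ys\<in>idx n D.
        cnj (prod_vec n (\<lambda>i. u (a ! i)) xs) * \<rho> xs ys * prod_vec n (\<lambda>i. u (a ! i)) ys)"

lemma trace_prod_kernel_expansion:
  assumes "\<And>i x y. i < n \<Longrightarrow> x < D \<Longrightarrow> y < D \<Longrightarrow> K i x y = (\<Sum>j<M. \<mu> i j * u j x * cnj (u j y))"
  shows "(\<Sum>xs\<in>idx n D. \<Sum>ys\<in>idx n D. (\<Prod>i<n. K i (xs ! i) (ys ! i)) * \<rho> ys xs)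
       = (\<Sum>a\<in>idx n M. (\<Prod>i<n. \<mu> i (a ! i)) * basis_weight n D u \<rho> a)"
proof -
  let ?U = "\<lambda>a. prod_vec n (\<lambda>i. u (a ! i))"
  have kernel: "(\<Prod>i<n. K i (xs ! i) (ys ! i)) = (\<Sum>a\<in>idx n M. (\<Prod>i<n. \<mu> i (a ! i)) * ?U a xs * cnj (?U a ys))"
    if "xs \<in> idx n D" "ys \<in> idx n D" for xs ys
  proof -
    have "(\<Prod>i<n. K i (xs ! i) (ys ! i)) = (\<Prod>i<n. \<Sum>j<M. \<mu> i j * u j (xs ! i) * cnj (u j (ys ! i)))"
      using that assms by (intro prod.cong) (auto simp: idx_nth)
    also have "\<dots> = (\<Sum>a\<in>idx n M. (\<Prod>i<n. \<mu> i (a ! i)) * ?U a xs * cnj (?U a ys))"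
      unfolding prod_sum_eq_sum_idx prod_vec_def by (simp add: prod.distrib cnj_prod)
    finally show ?thesis .
  qed
  have "(\<Sum>xs\<in>idx n D. \<Sum>ys\<in>idx n D. (\<Prod>i<n. K i (xs ! i) (ys ! i)) * \<rho> ys xs)
      = (\<Sum>xs\<in>idx n D. \<Sum>ys\<in>idx n D. \<Sum>a\<in>idx n M.
           (\<Prod>i<n. \<mu> i (a ! i)) * (cnj (?U a ys) * \<rho> ys xs * ?U a xs))"
    by (intro sum.cong refl) (simp add: kernel sum_distrib_left sum_distrib_right mult_ac)
  also have "\<dots> = (\<Sum>a\<in>idx n M. \<Sum>xs\<in>idx n D. \<Sum>ys\<in>idx n D.
           (\<Prod>i<n. \<mu> i (a ! i)) * (cnj (?U a ys) * \<rho> ys xs * ?U a xs))"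
    by (rule sum_swap_outer)
  also have "\<dots> = (\<Sum>a\<in>idx n M. (\<Prod>i<n. \<mu> i (a ! i)) * basis_weight n D u \<rho> a)"
    unfolding basis_weight_def sum_distrib_left by (rule sum.cong[OF refl], rule sum.swap)
  finally show ?thesis .
qed

lemma basis_weight_nonneg: "density_op n D \<rho> \<Longrightarrow> 0 \<le> Re (basis_weight n D u \<rho> a)"
  unfolding density_op_def basis_weight_def by blast

lemma sum_basis_weight:
  assumes "density_op n D \<rho>" "resolves_identity D M u"
  shows "(\<Sum>a\<in>idx n M. basis_weight n D u \<rho> a) = 1"
proof -
  have "(\<Sum>xs\<in>idx n D. \<Sum>ys\<in>idx n D. (\<Prod>i<n. if xs ! i = ys ! i then 1 else 0) * \<rho> ys xs)
      = (\<Sum>a\<in>idx n M. (\<Prod>i<n. 1) * basis_weight n D u \<rho> a)"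
    by (rule trace_prod_kernel_expansion) (use assms(2) in \<open>simp add: resolves_identity_def\<close>)
  then have "(\<Sum>a\<in>idx n M. basis_weight n D u \<rho> a)
      = (\<Sum>xs\<in>idx n D. \<Sum>ys\<in>idx n D. (\<Prod>i<n. if xs ! i = ys ! i then 1 else 0) * \<rho> ys xs)"
    by simp
  also have "\<dots> = (\<Sum>xs\<in>idx n D. \<Sum>ys\<in>idx n D. if ys = xs then \<rho> ys xs else 0)"
    by (intro sum.cong refl) (auto simp: prod_eq_indicator_idx)
  also have "\<dots> = (\<Sum>xs\<in>idx n D. \<rho> xs xs)" by (simp add: sum.delta)
  also have "\<dots> = 1" using assms(1) unfolding density_op_def by blast
  finally show ?thesis .
qed

lemma basis_weight_perm_idx:
  assumes "perm_invariant n D \<rho>" "\<sigma> permutes {..<n}" "length a = n"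
  shows "basis_weight n D u \<rho> (perm_idx \<sigma> a) = basis_weight n D u \<rho> a"
proof -
  let ?U = "prod_vec n (\<lambda>i. u (a ! i))" and ?\<pi> = "perm_idx \<sigma>" and ?\<pi>' = "perm_idx (inv_into UNIV \<sigma>)"
  have U: "prod_vec n (\<lambda>i. u (?\<pi> a ! i)) xs = ?U (?\<pi>' xs)" if "xs \<in> idx n D" for xs
  proof -
    have "prod_vec n (\<lambda>i. u (?\<pi> a ! i)) xs = prod_vec n (\<lambda>i. u (a ! \<sigma> i)) xs"
      unfolding prod_vec_def using assms(3) by (intro prod.cong) auto
    also have "\<dots> = ?U (?\<pi>' xs)"
      using prod_vec_perm_idx[OF permutes_inv[OF assms(2)], of xs] assms(2) that
      by (simp add: idx_length inv_inv_eq permutes_bij comp_def)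
    finally show ?thesis .
  qed
  define H where "H xs ys = cnj (?U (?\<pi>' xs)) * \<rho> xs ys * ?U (?\<pi>' ys)" for xs ys
  have "basis_weight n D u \<rho> (?\<pi> a) = (\<Sum>xs\<in>idx n D. \<Sum>ys\<in>idx n D. H xs ys)"
    unfolding basis_weight_def H_def by (intro sum.cong refl) (simp add: U)
  also have "\<dots> = (\<Sum>xs\<in>idx n D. \<Sum>ys\<in>idx n D. H xs (?\<pi> ys))"
    by (rule sum.cong[OF refl], rule sum_idx_perm_idx[OF assms(2), symmetric])
  also have "\<dots> = (\<Sum>xs\<in>idx n D. \<Sum>ys\<in>idx n D. H (?\<pi> xs) (?\<pi> ys))"
    by (rule sum_idx_perm_idx[OF assms(2), symmetric])
  also have "\<dots> = basis_weight n D u \<rho> a"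
    using assms(1,2) unfolding basis_weight_def perm_invariant_def H_def
    by (intro sum.cong refl) (simp add: perm_idx_inv_perm_idx idx_length)
  finally show ?thesis .
qed

section \<open>Symmetrization bounds for permutation-invariant weights\<close>

lemma sum_weighted_affine:
  fixes w g :: "'a \<Rightarrow> real"
  shows "(\<Sum>a\<in>A. w a * (c + d * g a)) = c * sum w A + d * (\<Sum>a\<in>A. w a * g a)"
  by (simp add: distrib_left sum.distrib mult.left_commute[of _ d]
      flip: sum_distrib_left sum_distrib_right)

definition prod_except :: "nat \<Rightarrow> (nat \<Rightarrow> real) \<Rightarrow> nat \<Rightarrow> nat list \<Rightarrow> real" where
  "prod_except n ev j a = (\<Prod>i\<in>{..<n} - {j}. ev (a ! i))"

lemma bij_betw_transpose_last:
  assumes "j < Suc N"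
  shows "bij_betw (Transposition.transpose j N) {..<N} ({..<Suc N} - {j})"
proof -
  have "bij_betw (Transposition.transpose j N) ({..<Suc N} - {N}) ({..<Suc N} - {j})"
    using assms by (intro bij_betw_DiffI permutes_imp_bij permutes_swap_id) (auto simp: bij_betw_def)
  moreover have "{..<Suc N} - {N} = {..<N}" by auto
  ultimately show ?thesis by simp
qed

text \<open>Swapping the last tensor factor with the j-th one does not change a permutation-invariant
  weight, so the last factor may be replaced by an average over all positions.\<close>
lemma symmetrize_last_factor:
  fixes W :: "nat list \<Rightarrow> real"
  assumes W: "\<And>\<sigma> a. \<sigma> permutes {..<Suc N} \<Longrightarrow> a \<in> idx (Suc N) M \<Longrightarrow> W (perm_idx \<sigma> a) = W a"
  shows "real (Suc N) * (\<Sum>a\<in>idx (Suc N) M. W a * ((\<Prod>i<N. ev (a ! i)) * h (a ! N)))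
       = (\<Sum>a\<in>idx (Suc N) M. W a * (\<Sum>j<Suc N. prod_except (Suc N) ev j a * h (a ! j)))"
proof -
  have swap: "(\<Sum>a\<in>idx (Suc N) M. W a * ((\<Prod>i<N. ev (a ! i)) * h (a ! N)))
      = (\<Sum>a\<in>idx (Suc N) M. W a * (prod_except (Suc N) ev j a * h (a ! j)))" if j: "j < Suc N" for j
  proof -
    let ?t = "Transposition.transpose j N"
    have t: "?t permutes {..<Suc N}" using j by (intro permutes_swap_id) auto
    have "(\<Sum>a\<in>idx (Suc N) M. W a * ((\<Prod>i<N. ev (a ! i)) * h (a ! N)))
        = (\<Sum>a\<in>idx (Suc N) M. W (perm_idx ?t a) * ((\<Prod>i<N. ev (perm_idx ?t a ! i)) * h (perm_idx ?t a ! N)))"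
      by (rule sum_idx_perm_idx[OF t, symmetric])
    also have "\<dots> = (\<Sum>a\<in>idx (Suc N) M. W a * (prod_except (Suc N) ev j a * h (a ! j)))"
    proof (rule sum.cong[OF refl])
      fix a assume a: "a \<in> idx (Suc N) M"
      have "(\<Prod>i<N. ev (perm_idx ?t a ! i)) = (\<Prod>i<N. ev (a ! ?t i))"
        using idx_length[OF a] by (intro prod.cong) auto
      also have "\<dots> = prod_except (Suc N) ev j a"
        unfolding prod_except_def by (rule prod.reindex_bij_betw[OF bij_betw_transpose_last[OF j]])
      finally show "W (perm_idx ?t a) * ((\<Prod>i<N. ev (perm_idx ?t a ! i)) * h (perm_idx ?t a ! N))
          = W a * (prod_except (Suc N) ev j a * h (a ! j))"
        using W[OF t a] idx_length[OF a] by simp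
    qed
    finally show ?thesis .
  qed
  have "real (Suc N) * (\<Sum>a\<in>idx (Suc N) M. W a * ((\<Prod>i<N. ev (a ! i)) * h (a ! N)))
      = (\<Sum>j<Suc N. \<Sum>a\<in>idx (Suc N) M. W a * ((\<Prod>i<N. ev (a ! i)) * h (a ! N)))"
    by simp
  also have "\<dots> = (\<Sum>j<Suc N. \<Sum>a\<in>idx (Suc N) M. W a * (prod_except (Suc N) ev j a * h (a ! j)))"
    by (rule sum.cong[OF refl]) (simp add: swap)
  also have "\<dots> = (\<Sum>a\<in>idx (Suc N) M. W a * (\<Sum>j<Suc N. prod_except (Suc N) ev j a * h (a ! j)))"
    unfolding sum_distrib_left by (rule sum.swap)
  finally show ?thesis .
qed

context
  fixes N M j\<^sub>0 :: nat and ev :: "nat \<Rightarrow> real" and \<beta> \<mu> \<delta> :: real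
  assumes ev_range: "\<And>j. j < M \<Longrightarrow> 0 \<le> ev j \<and> ev j \<le> 1"
    and ev_target: "ev j\<^sub>0 = 1"
    and ev_le_beta: "\<And>j. j < M \<Longrightarrow> j \<noteq> j\<^sub>0 \<Longrightarrow> ev j \<le> \<beta>"
    and beta_lt_1: "\<beta> < 1"
    and mu_pos: "0 < \<mu>"
    and mu_le_ev: "\<And>j. j < M \<Longrightarrow> 0 < ev j \<Longrightarrow> \<mu> \<le> ev j"
    and beta_pow_le: "\<beta> ^ N \<le> \<delta>"
    and zero_ev_imp: "\<And>j. j < M \<Longrightarrow> ev j = 0 \<Longrightarrow> 1 / real (Suc N) \<le> \<delta>"
    and N_pos: "1 \<le> N"
    and delta_nonneg: "0 \<le> \<delta>"
begin

lemma ev_nth_range: "a \<in> idx (Suc N) M \<Longrightarrow> i < Suc N \<Longrightarrow> 0 \<le> ev (a ! i) \<and> ev (a ! i) \<le> 1"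
  using ev_range idx_nth by blast

lemma prod_except_range:
  "a \<in> idx (Suc N) M \<Longrightarrow> 0 \<le> prod_except (Suc N) ev j a \<and> prod_except (Suc N) ev j a \<le> 1"
  unfolding prod_except_def using ev_nth_range by (auto intro!: prod_nonneg prod_le_1)

lemma prod_except_le_factor:
  assumes a: "a \<in> idx (Suc N) M" and "k < Suc N" "k \<noteq> j"
  shows "prod_except (Suc N) ev j a \<le> ev (a ! k)"
proof -
  have "prod_except (Suc N) ev j a = ev (a ! k) * (\<Prod>i\<in>{..<Suc N} - {j} - {k}. ev (a ! i))"
    unfolding prod_except_def using assms by (subst prod.remove[of _ k]) auto
  also have "\<dots> \<le> ev (a ! k) * 1"
    using ev_nth_range[OF a] assms by (intro mult_left_mono prod_le_1) auto
  finally show ?thesis by simp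
qed

lemma prod_except_eq_0: "k < Suc N \<Longrightarrow> k \<noteq> j \<Longrightarrow> ev (a ! k) = 0 \<Longrightarrow> prod_except (Suc N) ev j a = 0"
  unfolding prod_except_def by (intro prod_zero) auto

lemma prod_except_ge_mu_pow:
  assumes a: "a \<in> idx (Suc N) M" and "j < Suc N" "0 < prod_except (Suc N) ev j a"
  shows "\<mu> ^ N \<le> prod_except (Suc N) ev j a"
proof -
  have "(\<Prod>i\<in>{..<Suc N} - {j}. \<mu>) \<le> prod_except (Suc N) ev j a"
    unfolding prod_except_def
  proof (rule prod_mono)
    fix i assume i: "i \<in> {..<Suc N} - {j}"
    then have "ev (a ! i) \<noteq> 0" using assms(3) prod_except_eq_0[of i j a] by auto
    then show "0 \<le> \<mu> \<and> \<mu> \<le> ev (a ! i)"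
      using mu_pos mu_le_ev[of "a ! i"] ev_nth_range[OF a, of i] idx_nth[OF a, of i] i by force
  qed
  then show ?thesis using assms(2) by simp
qed

lemma prod_except_le_beta_pow:
  assumes a: "a \<in> idx (Suc N) M" and "j < Suc N" "\<forall>i<Suc N. a ! i \<noteq> j\<^sub>0"
  shows "prod_except (Suc N) ev j a \<le> \<beta> ^ N"
proof -
  have "prod_except (Suc N) ev j a \<le> (\<Prod>i\<in>{..<Suc N} - {j}. \<beta>)"
    unfolding prod_except_def
    using ev_nth_range[OF a] ev_le_beta idx_nth[OF a] assms(3) by (intro prod_mono) auto
  then show ?thesis using assms(2) by simp
qed

text \<open>A vanishing factor kills every product that contains it, so only the product omitting it
  survives.\<close>
lemma sum_prod_except_le_1:
  assumes a: "a \<in> idx (Suc N) M" and "i < Suc N" "ev (a ! i) = 0"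
  shows "(\<Sum>j<Suc N. prod_except (Suc N) ev j a) \<le> 1"
proof -
  have "(\<Sum>j<Suc N. prod_except (Suc N) ev j a) \<le> (\<Sum>j<Suc N. if j = i then 1 else 0)"
    using prod_except_range[OF a] prod_except_eq_0[OF assms(2) _ assms(3)] by (intro sum_mono) auto
  also have "\<dots> = 1" using assms(2) by simp
  finally show ?thesis .
qed

lemma pass_symmetrized_bound:
  assumes a: "a \<in> idx (Suc N) M"
  shows "(\<Sum>j<Suc N. prod_except (Suc N) ev j a)
    \<le> real (Suc N) * \<delta> + real (Suc N) / \<mu> ^ N * (\<Sum>j<Suc N. prod_except (Suc N) ev j a * (if a ! j = j\<^sub>0 then 1 else 0))"
    (is "?P \<le> ?n * \<delta> + ?n / \<mu> ^ N * ?F")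
proof -
  have "?P \<le> (\<Sum>j<Suc N. 1)" using prod_except_range[OF a] by (intro sum_mono) auto
  then have P_le: "?P \<le> ?n" by simp
  have F_nonneg: "0 \<le> ?F" using prod_except_range[OF a] by (intro sum_nonneg) auto
  consider (target_pos) j where "j < Suc N" "a ! j = j\<^sub>0" "0 < prod_except (Suc N) ev j a"
    | (no_target) "\<forall>i<Suc N. a ! i \<noteq> j\<^sub>0"
    | (target_zero) j where "j < Suc N" "a ! j = j\<^sub>0" "prod_except (Suc N) ev j a = 0"
  proof (cases "\<forall>i<Suc N. a ! i \<noteq> j\<^sub>0")
    case False
    then obtain j where j: "j < Suc N" "a ! j = j\<^sub>0" by auto
    show ?thesis
    proof (cases "prod_except (Suc N) ev j a = 0")
      case False
      then show ?thesis using that(1)[OF j] prod_except_range[OF a, of j] by simp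
    qed (use that(3)[OF j] in blast)
  qed (use that(2) in blast)
  then show ?thesis
  proof cases
    case target_pos
    have "\<mu> ^ N \<le> ?F"
      using prod_except_ge_mu_pow[OF a target_pos(1,3)] target_pos prod_except_range[OF a]
        member_le_sum[of j "{..<Suc N}" "\<lambda>j. prod_except (Suc N) ev j a * (if a ! j = j\<^sub>0 then 1 else 0)"]
      by force
    then have "?n / \<mu> ^ N * \<mu> ^ N \<le> ?n / \<mu> ^ N * ?F" using mu_pos by (intro mult_left_mono) auto
    then have "?n \<le> ?n / \<mu> ^ N * ?F" using mu_pos by simp
    then show ?thesis using P_le delta_nonneg by (smt (verit) mult_nonneg_nonneg of_nat_0_le_iff)
  next
    case no_target
    have "?P \<le> (\<Sum>j<Suc N. \<beta> ^ N)" using prod_except_le_beta_pow[OF a _ no_target] by (intro sum_mono) auto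
    also have "\<dots> \<le> ?n * \<delta>" using beta_pow_le by simp
    finally show ?thesis using F_nonneg mu_pos by (smt (verit) divide_nonneg_pos mult_nonneg_nonneg of_nat_0_le_iff zero_less_power)
  next
    case target_zero
    then obtain i where i: "i < Suc N" "i \<noteq> j" "ev (a ! i) = 0"
      unfolding prod_except_def by (auto simp: prod_zero_iff)
    have "?P \<le> 1" by (rule sum_prod_except_le_1[OF a i(1,3)])
    also have "1 \<le> ?n * \<delta>" using zero_ev_imp[OF idx_nth[OF a i(1)] i(3)] by (simp add: field_simps)
    finally show ?thesis using F_nonneg mu_pos by (smt (verit) divide_nonneg_pos mult_nonneg_nonneg of_nat_0_le_iff zero_less_power)
  qed
qed

lemma fail_symmetrized_bound:
  assumes a: "a \<in> idx (Suc N) M"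
  shows "real (Suc N) - (\<Sum>j<Suc N. prod_except (Suc N) ev j a * (if a ! j = j\<^sub>0 then 1 else 0))
    \<le> real (Suc N) / (1 - \<beta>) * (real (Suc N) - (\<Sum>j<Suc N. prod_except (Suc N) ev j a))"
    (is "?n - ?F \<le> ?n / (1 - \<beta>) * (?n - ?P)")
proof (cases "\<forall>i<Suc N. a ! i = j\<^sub>0")
  case True
  then have "prod_except (Suc N) ev j a = 1" for j unfolding prod_except_def by (simp add: ev_target)
  then show ?thesis using True by simp
next
  case False
  then obtain k where k: "k < Suc N" "a ! k \<noteq> j\<^sub>0" by auto
  have "?P \<le> (\<Sum>j<Suc N. \<beta> + (if j = k then 1 - \<beta> else 0))"
    using prod_except_range[OF a] prod_except_le_factor[OF a k(1)] ev_le_beta[OF idx_nth[OF a k(1)] k(2)]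
    by (intro sum_mono) fastforce
  also have "\<dots> = 1 + real N * \<beta>" using k(1) by (simp add: sum.distrib algebra_simps)
  finally have "1 - \<beta> \<le> ?n - ?P" using N_pos beta_lt_1 mult_right_mono[of 1 "real N" "1 - \<beta>"]
    by (simp add: algebra_simps)
  then have "?n / (1 - \<beta>) * (1 - \<beta>) \<le> ?n / (1 - \<beta>) * (?n - ?P)"
    using beta_lt_1 by (intro mult_left_mono) auto
  then have "?n \<le> ?n / (1 - \<beta>) * (?n - ?P)" using beta_lt_1 by simp
  moreover have "0 \<le> ?F" using prod_except_range[OF a] by (intro sum_nonneg) auto
  ultimately show ?thesis by linarith
qed

theorem symmetric_weight_bounds:
  fixes W :: "nat list \<Rightarrow> real"
  assumes W_nonneg: "\<And>a. a \<in> idx (Suc N) M \<Longrightarrow> 0 \<le> W a"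
    and W_sum: "(\<Sum>a\<in>idx (Suc N) M. W a) = 1"
    and W_perm: "\<And>\<sigma> a. \<sigma> permutes {..<Suc N} \<Longrightarrow> a \<in> idx (Suc N) M \<Longrightarrow> W (perm_idx \<sigma> a) = W a"
  defines "p \<equiv> \<Sum>a\<in>idx (Suc N) M. W a * (\<Prod>i<N. ev (a ! i))"
    and "f \<equiv> \<Sum>a\<in>idx (Suc N) M. W a * ((\<Prod>i<N. ev (a ! i)) * (if a ! N = j\<^sub>0 then 1 else 0))"
  shows "0 \<le> f" "f \<le> p" "p \<le> 1"
    "p \<le> \<delta> + real (Suc N) / \<mu> ^ N * f"
    "1 - f \<le> real (Suc N) / (1 - \<beta>) * (1 - p)"
proof -
  let ?I = "idx (Suc N) M" and ?n = "real (Suc N)"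
  define P where "P a = (\<Sum>j<Suc N. prod_except (Suc N) ev j a)" for a
  define F where "F a = (\<Sum>j<Suc N. prod_except (Suc N) ev j a * (if a ! j = j\<^sub>0 then 1 else 0))" for a
  have prod_range: "0 \<le> (\<Prod>i<N. ev (a ! i)) \<and> (\<Prod>i<N. ev (a ! i)) \<le> 1" if "a \<in> ?I" for a
    using ev_nth_range[OF that] by (auto intro!: prod_nonneg prod_le_1)
  show "0 \<le> f" unfolding f_def using W_nonneg prod_range by (intro sum_nonneg) auto
  show "f \<le> p" unfolding f_def p_def using W_nonneg prod_range by (intro sum_mono mult_left_mono) auto
  have "p \<le> (\<Sum>a\<in>?I. W a * 1)" unfolding p_def using W_nonneg prod_range by (intro sum_mono mult_left_mono) auto
  then show "p \<le> 1" using W_sum by simp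
  have np: "?n * p = (\<Sum>a\<in>?I. W a * P a)"
    using symmetrize_last_factor[OF W_perm, where ev = ev and h = "\<lambda>_. 1"] unfolding p_def P_def by simp
  have nf: "?n * f = (\<Sum>a\<in>?I. W a * F a)"
    unfolding f_def F_def by (rule symmetrize_last_factor[OF W_perm])
  have affine: "(\<Sum>a\<in>?I. W a * (c + d * G a)) = c + d * (\<Sum>a\<in>?I. W a * G a)" for c d G
    using sum_weighted_affine[where w = W and A = ?I] W_sum by simp
  have "?n * p \<le> (\<Sum>a\<in>?I. W a * (?n * \<delta> + ?n / \<mu> ^ N * F a))"
    unfolding np P_def F_def using pass_symmetrized_bound W_nonneg by (intro sum_mono mult_left_mono) auto
  also have "\<dots> = ?n * (\<delta> + ?n / \<mu> ^ N * f)" unfolding affine nf[symmetric] by (simp add: algebra_simps)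
  finally show "p \<le> \<delta> + ?n / \<mu> ^ N * f" by simp
  define C where "C = ?n / (1 - \<beta>)"
  have "?n * (1 - f) = (\<Sum>a\<in>?I. W a * (?n + (- 1) * F a))" unfolding affine nf[symmetric] by (simp add: algebra_simps)
  also have "\<dots> \<le> (\<Sum>a\<in>?I. W a * (?n * C + (- C) * P a))"
  proof (intro sum_mono mult_left_mono)
    fix a assume "a \<in> ?I"
    then have "?n - F a \<le> C * (?n - P a)"
      unfolding P_def F_def C_def by (rule fail_symmetrized_bound)
    then show "?n + (- 1) * F a \<le> ?n * C + (- C) * P a" by (simp add: algebra_simps)
  qed (use W_nonneg in auto)
  also have "\<dots> = ?n * (C * (1 - p))" unfolding affine np[symmetric] by (simp add: algebra_simps)
  finally have "?n * (1 - f) \<le> ?n * (C * (1 - p))" .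
  then show "1 - f \<le> ?n / (1 - \<beta>) * (1 - p)" unfolding C_def by (rule mult_left_le_imp_le) simp
qed

end

section \<open>The verification operator in an eigenbasis\<close>

lemma qform_vec_eq_braket: "qform A (vec D g) = braket D g (mat_apply A D g)"
  unfolding qform_def braket_def mat_apply_def by (simp add: sum_distrib_left mult_ac)

lemma mat_apply_one: "x < D \<Longrightarrow> mat_apply (1\<^sub>m D) D g x = g x"
proof -
  assume "x < D"
  then have "mat_apply (1\<^sub>m D) D g x = (\<Sum>y<D. if y = x then g y else 0)"
    unfolding mat_apply_def by (intro sum.cong refl) auto
  then show ?thesis using \<open>x < D\<close> by simp
qed

lemma braket_one: "braket D g (mat_apply (1\<^sub>m D) D g) = braket D g g"
  by (rule braket_cong) (auto simp: mat_apply_one)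

locale verification_setup =
  fixes D :: nat and \<Omega> :: "complex mat" and \<Psi> :: "complex vec"
  assumes dim_ge_2: "2 \<le> D" and unit_Psi: "is_unit_vec D \<Psi>"
    and verification: "verification_operator D \<Omega> \<Psi>"
begin

abbreviation \<psi> :: "nat \<Rightarrow> complex" where "\<psi> \<equiv> vec_index \<Psi>"

lemma dim_Psi [simp]: "dim_vec \<Psi> = D"
  using unit_Psi unfolding is_unit_vec_def by simp

lemma Psi_eq_vec: "\<Psi> = vec D \<psi>"
  by (rule eq_vecI) auto

lemma hermitian_Omega: "hermitian_mat D \<Omega>"
  using verification unfolding verification_operator_def by simp

lemma dim_Omega [simp]: "dim_row \<Omega> = D" "dim_col \<Omega> = D"
  using hermitian_Omega unfolding hermitian_mat_def by auto

lemma mult_Omega_vec: "\<Omega> *\<^sub>v vec D g = vec D (mat_apply \<Omega> D g)"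
  by (rule eq_vecI) (auto simp: mat_apply_def scalar_prod_def atLeast0LessThan mult.commute)

lemma braket_Omega_range:
  "0 \<le> Re (braket D g (mat_apply \<Omega> D g)) \<and> Re (braket D g (mat_apply \<Omega> D g)) \<le> Re (braket D g g)"
proof -
  have "\<forall>v\<in>carrier_vec D. 0 \<le> Re (qform \<Omega> v) \<and> Re (qform \<Omega> v) \<le> Re (qform (1\<^sub>m D) v)"
    using verification unfolding verification_operator_def by blast
  from this[rule_format, of "vec D g"] show ?thesis unfolding qform_vec_eq_braket braket_one by simp
qed

lemma Omega_psi: "x < D \<Longrightarrow> mat_apply \<Omega> D \<psi> x = \<psi> x"
  using verification mult_Omega_vec[of \<psi>] unfolding verification_operator_def Psi_eq_vec[symmetric]
  by (metis index_vec)

lemma braket_psi: "braket D \<psi> \<psi> = 1"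
  using unit_Psi unfolding is_unit_vec_def braket_self by simp

lemma Omega_fixed_imp_multiple:
  assumes "\<And>x. x < D \<Longrightarrow> mat_apply \<Omega> D g x = g x"
  obtains c where "\<And>x. x < D \<Longrightarrow> g x = c * \<psi> x"
proof -
  have "\<Omega> *\<^sub>v vec D g = vec D g" unfolding mult_Omega_vec by (rule eq_vecI) (auto simp: assms)
  then obtain c where "vec D g = c \<cdot>\<^sub>v \<Psi>"
    using verification unfolding verification_operator_def by (meson vec_carrier)
  then show ?thesis using that by (metis index_smult_vec(1) index_vec dim_Psi)
qed

lemma braket_proj: "braket D g (mat_apply (proj \<Psi>) D g) = braket D g \<psi> * braket D \<psi> g"
proof -
  have "mat_apply (proj \<Psi>) D g x = braket D \<psi> g * \<psi> x" if "x < D" for x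
    using that by (simp add: mat_apply_def braket_def proj_def sum_distrib_left mult_ac)
  then have "braket D g (mat_apply (proj \<Psi>) D g) = braket D g (\<lambda>x. braket D \<psi> g * \<psi> x)"
    by (intro braket_cong) auto
  also have "\<dots> = braket D \<psi> g * braket D g \<psi>" by (rule braket_scale_right)
  finally show ?thesis by (simp only: mult.commute)
qed

lemma eigenbasis_exists:
  obtains M u where "orthonormal D M u" "resolves_identity D M u" "\<forall>j<M. is_eigenfun \<Omega> D (u j)"
    "0 < M" "u 0 = \<psi>"
proof -
  have "orthonormal D 1 (\<lambda>_. \<psi>)" using braket_psi unfolding orthonormal_def by simp
  moreover have "is_eigenfun \<Omega> D \<psi>" unfolding is_eigenfun_def using Omega_psi by auto
  ultimately obtain M u where "1 \<le> M" "\<forall>j<1. u j = \<psi>" "orthonormal D M u"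
      "resolves_identity D M u" "\<forall>j<M. is_eigenfun \<Omega> D (u j)"
    using hermitian_eigenbasis_extension[OF hermitian_Omega, of 1 "\<lambda>_. \<psi>"] by blast
  then show ?thesis using that by simp
qed

end

locale verification_eigenbasis = verification_setup +
  fixes M :: nat and u :: "nat \<Rightarrow> nat \<Rightarrow> complex"
  assumes orthonormal_u: "orthonormal D M u" and resolves_u: "resolves_identity D M u"
    and eigen_u: "\<And>j. j < M \<Longrightarrow> is_eigenfun \<Omega> D (u j)"
    and M_pos: "0 < M" and u_0: "u 0 = \<psi>"
begin

definition ev :: "nat \<Rightarrow> real" where
  "ev j = Re (braket D (u j) (mat_apply \<Omega> D (u j)))"

lemma braket_u: "j < M \<Longrightarrow> k < M \<Longrightarrow> braket D (u j) (u k) = (if j = k then 1 else 0)"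
  using orthonormal_u unfolding orthonormal_def by simp

lemma Omega_u:
  assumes j: "j < M" and x: "x < D"
  shows "mat_apply \<Omega> D (u j) x = of_real (ev j) * u j x"
proof -
  obtain \<mu> where \<mu>: "\<And>x. x < D \<Longrightarrow> mat_apply \<Omega> D (u j) x = \<mu> * u j x"
    using eigen_u[OF j] unfolding is_eigenfun_def by auto
  have braket_\<mu>: "braket D (u j) (mat_apply \<Omega> D (u j)) = \<mu>"
    using braket_cong[of D "u j" "u j" "mat_apply \<Omega> D (u j)" "\<lambda>x. \<mu> * u j x"] \<mu>
    by (simp add: braket_scale_right braket_u[OF j j])
  have "cnj \<mu> = \<mu>"
    unfolding braket_\<mu>[symmetric] braket_cnj by (rule hermitian_braket[OF hermitian_Omega, symmetric])
  then have "Im \<mu> = 0" by (simp add: complex_eq_iff)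
  then have "\<mu> = of_real (ev j)" unfolding ev_def braket_\<mu> by (simp add: complex_eq_iff)
  then show ?thesis using \<mu>[OF x] by simp
qed

lemma braket_Omega_u: "j < M \<Longrightarrow> braket D (u j) (mat_apply \<Omega> D (u j)) = of_real (ev j)"
  using braket_cong[of D "u j" "u j" "mat_apply \<Omega> D (u j)" "\<lambda>x. of_real (ev j) * u j x"] Omega_u
  by (simp add: braket_scale_right braket_u)

lemma ev_range: "j < M \<Longrightarrow> 0 \<le> ev j \<and> ev j \<le> 1"
  using braket_Omega_range[of "u j"] braket_u unfolding ev_def by simp

lemma ev_0: "ev 0 = 1"
  using braket_Omega_u[OF M_pos] Omega_psi braket_psi braket_cong[of D \<psi> \<psi> "mat_apply \<Omega> D \<psi>" \<psi>]
  unfolding u_0 by simp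

lemma braket_Omega_psi: "braket D \<psi> (mat_apply \<Omega> D \<psi>) = 1"
  using braket_Omega_u[OF M_pos] ev_0 u_0 by simp

lemma braket_psi_u: "j < M \<Longrightarrow> j \<noteq> 0 \<Longrightarrow> braket D \<psi> (u j) = 0"
  using braket_u[OF M_pos] unfolding u_0 by simp

lemma ev_eq_1_iff: assumes "j < M" shows "ev j = 1 \<longleftrightarrow> j = 0"
proof
  assume "ev j = 1"
  then obtain c where c: "\<And>x. x < D \<Longrightarrow> u j x = c * \<psi> x"
    using Omega_fixed_imp_multiple[of "u j"] Omega_u[OF assms] by auto
  have "braket D (u j) (u j) = cnj c * c"
    using braket_cong[of D "u j" "\<lambda>x. c * \<psi> x" "u j" "\<lambda>x. c * \<psi> x"] c
    by (simp add: braket_scale_left braket_scale_right braket_psi)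
  moreover have "braket D \<psi> (u j) = c"
    using braket_cong[of D \<psi> \<psi> "u j" "\<lambda>x. c * \<psi> x"] c by (simp add: braket_scale_right braket_psi)
  ultimately show "j = 0" using braket_psi_u[OF assms] braket_u[OF assms assms] by (cases "j = 0") auto
qed (simp add: ev_0)

lemma Omega_expansion:
  assumes "x < D" "y < D"
  shows "\<Omega> $$ (x, y) = (\<Sum>j<M. of_real (ev j) * u j x * cnj (u j y))"
proof (rule resolves_identity_eqI[OF resolves_u _ assms(1), where v = "\<lambda>x. \<Omega> $$ (x, y)"])
  fix j assume j: "j < M"
  have "braket D (u j) (\<lambda>x. \<Omega> $$ (x, y)) = cnj (mat_apply \<Omega> D (u j) y)"
    unfolding braket_def mat_apply_def cnj_sum
    by (intro sum.cong refl) (simp add: hermitian_mat_cnj[OF hermitian_Omega] assms(2) mult.commute)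
  also have "\<dots> = braket D (u j) (\<lambda>x. \<Sum>k<M. of_real (ev k) * cnj (u k y) * u k x)"
    using Omega_u[OF j assms(2)] braket_orthonormal_sum[OF orthonormal_u j] by simp
  finally show "braket D (u j) (\<lambda>x. \<Omega> $$ (x, y)) = braket D (u j) (\<lambda>x. \<Sum>j<M. of_real (ev j) * u j x * cnj (u j y))"
    by (simp add: mult_ac)
qed

lemma eigenvector_u: "j < M \<Longrightarrow> eigenvector \<Omega> (vec D (u j)) (of_real (ev j))"
proof -
  assume j: "j < M"
  have "vec D (u j) \<noteq> 0\<^sub>v D"
  proof
    assume "vec D (u j) = 0\<^sub>v D"
    then have "\<And>x. x < D \<Longrightarrow> u j x = 0" by (metis index_vec index_zero_vec(1))
    then have "braket D (u j) (u j) = 0" unfolding braket_def by simp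
    then show False using braket_u[OF j j] by simp
  qed
  then show ?thesis
    unfolding eigenvector_def using Omega_u[OF j] by (auto simp: mult_Omega_vec intro!: eq_vecI)
qed

lemma eigenvalue_Omega_imp_ev:
  assumes "eigenvalue \<Omega> k"
  obtains j where "j < M" "k = of_real (ev j)"
proof -
  obtain v where v: "v \<in> carrier_vec D" "v \<noteq> 0\<^sub>v D" "\<Omega> *\<^sub>v v = k \<cdot>\<^sub>v v"
    using assms unfolding eigenvalue_def eigenvector_def by auto
  let ?g = "vec_index v"
  have v_vec: "v = vec D ?g" using v(1) by (intro eq_vecI) auto
  have Omega_v: "mat_apply \<Omega> D ?g x = k * v $ x" if "x < D" for x
    using arg_cong[where f = "\<lambda>w. w $ x", OF v(3)] that v(1)
    by (subst (asm) v_vec) (simp add: mult_Omega_vec)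
  obtain j where j: "j < M" "braket D (u j) ?g \<noteq> 0"
  proof (rule ccontr)
    assume "\<not> thesis"
    then have "\<forall>j<M. braket D (u j) ?g = 0" using that by blast
    then have "v $ x = 0" if "x < D" for x
      using resolves_identity_eqI[OF resolves_u _ that, of ?g "\<lambda>_. 0"] by (simp add: braket_def)
    then have "v = 0\<^sub>v D" using v(1) by (intro eq_vecI) auto
    with v(2) show False by contradiction
  qed
  have "k * braket D (u j) ?g = braket D (u j) (mat_apply \<Omega> D ?g)"
    by (simp add: braket_scale_right[symmetric] Omega_v cong: braket_cong)
  also have "\<dots> = braket D (mat_apply \<Omega> D (u j)) ?g"
    by (rule hermitian_braket[OF hermitian_Omega])
  also have "\<dots> = of_real (ev j) * braket D (u j) ?g"
    using braket_cong[of D "mat_apply \<Omega> D (u j)" "\<lambda>x. of_real (ev j) * u j x"] Omega_u[OF j(1)]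
    by (simp add: braket_scale_left)
  finally show ?thesis using j that by auto
qed

lemma eigenvalue_Omega_iff: "eigenvalue \<Omega> k \<longleftrightarrow> (\<exists>j<M. k = of_real (ev j))"
  using eigenvector_u eigenvalue_Omega_imp_ev unfolding eigenvalue_def by metis

lemma two_le_M: "2 \<le> M"
proof (rule ccontr)
  assume "\<not> 2 \<le> M"
  then have "M = 1" using M_pos by simp
  then have "\<psi> x * cnj (\<psi> y) = (if x = y then 1 else 0)" if "x < D" "y < D" for x y
    using resolves_u that unfolding resolves_identity_def u_0[symmetric] by simp
  from this[of 0 1] this[of 0 0] this[of 1 1] dim_ge_2 show False by auto
qed

lemma eigenvalues_Omega_except_1:
  "Re ` {k. eigenvalue \<Omega> k \<and> k \<noteq> 1} = ev ` {1..<M}"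
  using ev_eq_1_iff unfolding eigenvalue_Omega_iff by (force simp: image_iff)

lemma beta_ev_eq: "beta_ev \<Omega> = Max (ev ` {1..<M})"
  unfolding beta_ev_def eigenvalues_Omega_except_1 ..

lemma tau_ev_eq: "tau_ev \<Omega> = Min (ev ` {..<M})"
  unfolding tau_ev_def eigenvalue_Omega_iff by (force simp: image_iff intro!: arg_cong[where f = Min])

lemma ev_le_beta: "j < M \<Longrightarrow> j \<noteq> 0 \<Longrightarrow> ev j \<le> beta_ev \<Omega>"
  unfolding beta_ev_eq by (intro Max_ge) auto

lemma beta_attained: obtains j where "0 < j" "j < M" "ev j = beta_ev \<Omega>"
proof -
  have "ev ` {1..<M} \<noteq> {}" using two_le_M by auto
  from Max_in[OF _ this] obtain j where "j \<in> {1..<M}" "ev j = Max (ev ` {1..<M})" by auto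
  then show ?thesis using that unfolding beta_ev_eq by (auto simp: Suc_le_eq)
qed

lemma beta_lt_1: "beta_ev \<Omega> < 1"
  using beta_attained ev_range ev_eq_1_iff by (metis less_eq_real_def not_gr0)

lemma tau_le_ev: "j < M \<Longrightarrow> tau_ev \<Omega> \<le> ev j"
  unfolding tau_ev_eq by (intro Min_le) auto

lemma tau_attained: obtains j where "j < M" "ev j = tau_ev \<Omega>"
proof -
  have "ev ` {..<M} \<noteq> {}" using M_pos by auto
  from Min_in[OF _ this] show ?thesis using that unfolding tau_ev_eq by auto
qed

lemma beta_pow_le_delta_c: "beta_ev \<Omega> ^ N \<le> delta_c N \<Omega>"
  unfolding delta_c_def by auto

lemma zero_ev_imp_delta_c: "j < M \<Longrightarrow> ev j = 0 \<Longrightarrow> 1 / real (Suc N) \<le> delta_c N \<Omega>"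
  using tau_le_ev[of j] unfolding delta_c_def by auto

lemma delta_c_pos: "0 < delta_c N \<Omega>"
proof (cases "0 < tau_ev \<Omega>")
  case True
  obtain j where "0 < j" "j < M" "ev j = beta_ev \<Omega>" by (rule beta_attained)
  then have "0 < beta_ev \<Omega>" using tau_le_ev[of j] True by simp
  then show ?thesis using True unfolding delta_c_def by simp
qed (simp add: delta_c_def less_max_iff_disj)

definition min_pos_ev :: real where
  "min_pos_ev = Min (ev ` {j. j < M \<and> 0 < ev j})"

lemma min_pos_ev: "0 < min_pos_ev" "j < M \<Longrightarrow> 0 < ev j \<Longrightarrow> min_pos_ev \<le> ev j"
proof -
  have "ev ` {j. j < M \<and> 0 < ev j} \<noteq> {}" using M_pos ev_0 by force
  from Min_in[OF _ this] show "0 < min_pos_ev" unfolding min_pos_ev_def by auto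
  show "j < M \<Longrightarrow> 0 < ev j \<Longrightarrow> min_pos_ev \<le> ev j" unfolding min_pos_ev_def by (intro Min_le) auto
qed

abbreviation PI :: "nat \<Rightarrow> op_n set" where
  "PI N \<equiv> PI_states (N + 1) (dim_vec \<Psi>)"

lemma p_val_eq: "p_val N \<Omega> \<Psi> \<rho> = Re (trace_prod (Suc N) D (tensor_last N \<Omega> (1\<^sub>m D)) \<rho>)"
  unfolding p_val_def by simp

lemma f_val_eq: "f_val N \<Omega> \<Psi> \<rho> = Re (trace_prod (Suc N) D (tensor_last N \<Omega> (proj \<Psi>)) \<rho>)"
  unfolding f_val_def by simp

lemma trace_tensor_last_expansion:
  assumes "\<And>x y. x < D \<Longrightarrow> y < D \<Longrightarrow> B $$ (x, y) = (\<Sum>j<M. b j * u j x * cnj (u j y))"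
  shows "trace_prod (Suc N) D (tensor_last N \<Omega> B) \<rho>
    = (\<Sum>a\<in>idx (Suc N) M. of_real (\<Prod>i<N. ev (a ! i)) * b (a ! N) * basis_weight (Suc N) D u \<rho> a)"
proof -
  let ?\<mu> = "\<lambda>i j. if i < N then of_real (ev j) else b j"
  have "trace_prod (Suc N) D (tensor_last N \<Omega> B) \<rho>
      = (\<Sum>xs\<in>idx (Suc N) D. \<Sum>ys\<in>idx (Suc N) D.
           (\<Prod>i<Suc N. (if i < N then \<Omega> else B) $$ (xs ! i, ys ! i)) * \<rho> ys xs)"
    unfolding trace_prod_def tensor_last_def by simp
  also have "\<dots> = (\<Sum>a\<in>idx (Suc N) M. (\<Prod>i<Suc N. ?\<mu> i (a ! i)) * basis_weight (Suc N) D u \<rho> a)"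
    by (rule trace_prod_kernel_expansion) (auto simp: Omega_expansion assms)
  also have "\<dots> = (\<Sum>a\<in>idx (Suc N) M. of_real (\<Prod>i<N. ev (a ! i)) * b (a ! N) * basis_weight (Suc N) D u \<rho> a)"
    by (simp add: of_real_prod)
  finally show ?thesis .
qed

lemma p_val_expansion:
  "p_val N \<Omega> \<Psi> \<rho> = (\<Sum>a\<in>idx (Suc N) M. Re (basis_weight (Suc N) D u \<rho> a) * (\<Prod>i<N. ev (a ! i)))"
proof -
  have "trace_prod (Suc N) D (tensor_last N \<Omega> (1\<^sub>m D)) \<rho>
      = (\<Sum>a\<in>idx (Suc N) M. of_real (\<Prod>i<N. ev (a ! i)) * 1 * basis_weight (Suc N) D u \<rho> a)"
    by (rule trace_tensor_last_expansion) (use resolves_u in \<open>simp add: resolves_identity_def\<close>)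
  then show ?thesis unfolding p_val_eq Re_sum by (simp add: mult.commute del: of_real_prod)
qed

lemma f_val_expansion:
  "f_val N \<Omega> \<Psi> \<rho> = (\<Sum>a\<in>idx (Suc N) M.
     Re (basis_weight (Suc N) D u \<rho> a) * ((\<Prod>i<N. ev (a ! i)) * (if a ! N = 0 then 1 else 0)))"
proof -
  have "trace_prod (Suc N) D (tensor_last N \<Omega> (proj \<Psi>)) \<rho>
      = (\<Sum>a\<in>idx (Suc N) M. of_real (\<Prod>i<N. ev (a ! i)) * (if a ! N = 0 then 1 else 0) * basis_weight (Suc N) D u \<rho> a)"
  proof (rule trace_tensor_last_expansion)
    fix x y assume "x < D" "y < D"
    have "(\<Sum>j<M. (if j = 0 then 1 else 0) * u j x * cnj (u j y)) = (\<Sum>j<M. if j = 0 then u j x * cnj (u j y) else 0)"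
      by (intro sum.cong) auto
    then show "proj \<Psi> $$ (x, y) = (\<Sum>j<M. (if j = 0 then 1 else 0) * u j x * cnj (u j y))"
      using M_pos \<open>x < D\<close> \<open>y < D\<close> by (simp add: proj_def u_0)
  qed
  then have "f_val N \<Omega> \<Psi> \<rho> = (\<Sum>a\<in>idx (Suc N) M.
      Re (of_real (\<Prod>i<N. ev (a ! i)) * (if a ! N = 0 then 1 else 0) * basis_weight (Suc N) D u \<rho> a))"
    unfolding f_val_eq by (simp only: Re_sum)
  also have "\<dots> = (\<Sum>a\<in>idx (Suc N) M.
      Re (basis_weight (Suc N) D u \<rho> a) * ((\<Prod>i<N. ev (a ! i)) * (if a ! N = 0 then 1 else 0)))"
    by (rule sum.cong[OF refl]) (simp add: mult.commute del: of_real_prod)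
  finally show ?thesis .
qed

lemma PI_state_bounds:
  assumes "\<rho> \<in> PI N" "1 \<le> N"
  shows "0 \<le> f_val N \<Omega> \<Psi> \<rho>" "f_val N \<Omega> \<Psi> \<rho> \<le> p_val N \<Omega> \<Psi> \<rho>" "p_val N \<Omega> \<Psi> \<rho> \<le> 1"
    "p_val N \<Omega> \<Psi> \<rho> \<le> delta_c N \<Omega> + real (Suc N) / min_pos_ev ^ N * f_val N \<Omega> \<Psi> \<rho>"
    "1 - f_val N \<Omega> \<Psi> \<rho> \<le> real (Suc N) / (1 - beta_ev \<Omega>) * (1 - p_val N \<Omega> \<Psi> \<rho>)"
proof -
  have \<rho>: "density_op (Suc N) D \<rho>" "perm_invariant (Suc N) D \<rho>"
    using assms(1) unfolding PI_states_def by auto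
  define W where "W a = Re (basis_weight (Suc N) D u \<rho> a)" for a
  have W_nonneg: "0 \<le> W a" for a unfolding W_def by (rule basis_weight_nonneg[OF \<rho>(1)])
  have W_sum: "(\<Sum>a\<in>idx (Suc N) M. W a) = 1"
    using sum_basis_weight[OF \<rho>(1) resolves_u] unfolding W_def by (metis Re_sum one_complex.sel(1))
  have W_perm: "W (perm_idx \<sigma> a) = W a" if "\<sigma> permutes {..<Suc N}" "a \<in> idx (Suc N) M" for \<sigma> a
    unfolding W_def using basis_weight_perm_idx[OF \<rho>(2) that(1) idx_length[OF that(2)]] by simp
  note bounds = symmetric_weight_bounds[where ev = ev and j\<^sub>0 = 0,
      OF ev_range ev_0 ev_le_beta beta_lt_1 min_pos_ev beta_pow_le_delta_c zero_ev_imp_delta_c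
      assms(2) less_imp_le[OF delta_c_pos] W_nonneg W_sum W_perm]
  show "0 \<le> f_val N \<Omega> \<Psi> \<rho>" "f_val N \<Omega> \<Psi> \<rho> \<le> p_val N \<Omega> \<Psi> \<rho>" "p_val N \<Omega> \<Psi> \<rho> \<le> 1"
    "p_val N \<Omega> \<Psi> \<rho> \<le> delta_c N \<Omega> + real (Suc N) / min_pos_ev ^ N * f_val N \<Omega> \<Psi> \<rho>"
    "1 - f_val N \<Omega> \<Psi> \<rho> \<le> real (Suc N) / (1 - beta_ev \<Omega>) * (1 - p_val N \<Omega> \<Psi> \<rho>)"
    using bounds unfolding p_val_expansion f_val_expansion W_def by (simp_all add: mult.commute)
qed

lemma convex_PI_pairs: "convex ((\<lambda>\<rho>. (p_val N \<Omega> \<Psi> \<rho>, f_val N \<Omega> \<Psi> \<rho>)) ` PI N)"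
proof (rule convexI)
  fix x y and s t :: real
  assume "x \<in> (\<lambda>\<rho>. (p_val N \<Omega> \<Psi> \<rho>, f_val N \<Omega> \<Psi> \<rho>)) ` PI N" "y \<in> (\<lambda>\<rho>. (p_val N \<Omega> \<Psi> \<rho>, f_val N \<Omega> \<Psi> \<rho>)) ` PI N"
    and st: "0 \<le> s" "0 \<le> t" "s + t = 1"
  then obtain \<rho> \<rho>' where \<rho>: "\<rho> \<in> PI N" "\<rho>' \<in> PI N"
    and xy: "x = (p_val N \<Omega> \<Psi> \<rho>, f_val N \<Omega> \<Psi> \<rho>)" "y = (p_val N \<Omega> \<Psi> \<rho>', f_val N \<Omega> \<Psi> \<rho>')" by blast
  obtain \<rho>'' where "\<rho>'' \<in> PI N"
    "\<And>T. trace_prod (N + 1) D T \<rho>'' = of_real s * trace_prod (N + 1) D T \<rho> + of_real (1 - s) * trace_prod (N + 1) D T \<rho>'"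
    using PI_states_convex_comb[of \<rho> "N + 1" D \<rho>' s] \<rho> st by auto
  moreover have "1 - s = t" using st by simp
  ultimately show "s *\<^sub>R x + t *\<^sub>R y \<in> (\<lambda>\<rho>. (p_val N \<Omega> \<Psi> \<rho>, f_val N \<Omega> \<Psi> \<rho>)) ` PI N"
    unfolding xy by (intro image_eqI[of _ _ \<rho>'']) (simp_all add: p_val_def f_val_def)
qed

lemma perfect_PI_state: "\<exists>\<rho>\<in>PI N. p_val N \<Omega> \<Psi> \<rho> = 1 \<and> f_val N \<Omega> \<Psi> \<rho> = 1"
proof (intro bexI conjI)
  show "p_val N \<Omega> \<Psi> (prod_state (Suc N) (\<lambda>_. \<psi>)) = 1" "f_val N \<Omega> \<Psi> (prod_state (Suc N) (\<lambda>_. \<psi>)) = 1"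
    unfolding p_val_eq f_val_eq trace_tensor_last_prod_state
    by (simp_all add: braket_Omega_psi braket_one braket_proj braket_psi)
  show "prod_state (Suc N) (\<lambda>_. \<psi>) \<in> PI N"
    unfolding PI_states_def using density_prod_state braket_psi perm_invariant_prod_state_const by simp
qed

lemma critical_PI_state_beta: "\<exists>\<rho>\<in>PI N. p_val N \<Omega> \<Psi> \<rho> = beta_ev \<Omega> ^ N \<and> f_val N \<Omega> \<Psi> \<rho> = 0"
proof -
  obtain j where j: "0 < j" "j < M" "ev j = beta_ev \<Omega>" by (rule beta_attained)
  let ?\<rho> = "prod_state (Suc N) (\<lambda>_. u j)"
  have "?\<rho> \<in> PI N"
    unfolding PI_states_def using density_prod_state braket_u[OF j(2) j(2)] perm_invariant_prod_state_const by simp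
  moreover have "p_val N \<Omega> \<Psi> ?\<rho> = beta_ev \<Omega> ^ N" "f_val N \<Omega> \<Psi> ?\<rho> = 0"
    unfolding p_val_eq f_val_eq trace_tensor_last_prod_state
    using braket_Omega_u[OF j(2)] braket_u[OF j(2) j(2)] braket_psi_u[OF j(2)] j(1,3)
    by (simp_all add: braket_one braket_proj)
  ultimately show ?thesis by blast
qed

text \<open>For a zero eigenvalue the state has u j at one of the N + 1 positions and \<psi> elsewhere,
  uniformly mixed over the position: only the term with u j at the last position passes.\<close>
lemma critical_PI_state_zero:
  assumes "j < M" "ev j = 0"
  shows "\<exists>\<rho>\<in>PI N. p_val N \<Omega> \<Psi> \<rho> = 1 / real (Suc N) \<and> f_val N \<Omega> \<Psi> \<rho> = 0"
proof -
  define g where "g k i = (if i = k then u j else \<psi>)" for k i :: nat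
  let ?\<rho> = "mixture (Suc N) (\<lambda>_. 1 / real (Suc N)) (\<lambda>k. prod_state (Suc N) (g k))"
  have j_ne_0: "j \<noteq> 0" using assms(2) ev_0 by (metis zero_neq_one)
  have "density_op (Suc N) D ?\<rho>"
    unfolding g_def using braket_u[OF assms(1) assms(1)] braket_psi
    by (intro density_mixture density_prod_state) auto
  moreover have "perm_invariant (Suc N) D ?\<rho>"
    unfolding g_def by (rule perm_invariant_symmetrized_prod_state)
  ultimately have "?\<rho> \<in> PI N" unfolding PI_states_def by simp
  moreover have "trace_prod (Suc N) D (tensor_last N \<Omega> B) ?\<rho>
      = of_real (1 / real (Suc N)) * braket D (u j) (mat_apply B D (u j))" for B
  proof -
    have "(\<Prod>i<N. braket D (g k i) (mat_apply \<Omega> D (g k i))) = (if k = N then 1 else 0)" if "k < Suc N" for k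
      using that braket_Omega_u[OF assms(1)] assms(2) braket_Omega_psi
      by (auto simp: g_def intro!: prod_zero bexI[of _ k])
    then show ?thesis
      unfolding trace_prod_mixture trace_tensor_last_prod_state by (simp add: g_def)
  qed
  then have "p_val N \<Omega> \<Psi> ?\<rho> = 1 / real (Suc N)" "f_val N \<Omega> \<Psi> ?\<rho> = 0"
    unfolding p_val_eq f_val_eq using braket_u[OF assms(1) assms(1)] braket_psi_u[OF assms(1) j_ne_0]
    by (simp_all add: braket_one braket_proj)
  ultimately show ?thesis by blast
qed

lemma critical_PI_state: "\<exists>\<rho>\<in>PI N. p_val N \<Omega> \<Psi> \<rho> = delta_c N \<Omega> \<and> f_val N \<Omega> \<Psi> \<rho> = 0"
proof (cases "0 < tau_ev \<Omega> \<or> 1 / real (N + 1) \<le> beta_ev \<Omega> ^ N")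
  case True
  then have "delta_c N \<Omega> = beta_ev \<Omega> ^ N" unfolding delta_c_def by auto
  then show ?thesis using critical_PI_state_beta by simp
next
  case False
  then have "delta_c N \<Omega> = 1 / real (Suc N)" unfolding delta_c_def by auto
  moreover obtain j where "j < M" "ev j = tau_ev \<Omega>" by (rule tau_attained)
  moreover have "ev j = 0" using calculation(2,3) False ev_range by force
  ultimately show ?thesis using critical_PI_state_zero by simp
qed

theorem PI_pass_fidelity_region:
  assumes "1 \<le> N"
  shows "pass_fidelity_region (PI N) (p_val N \<Omega> \<Psi>) (f_val N \<Omega> \<Psi>) (delta_c N \<Omega>)"
proof
  show "\<exists>C>0. \<forall>\<rho>\<in>PI N. p_val N \<Omega> \<Psi> \<rho> \<le> delta_c N \<Omega> + C * f_val N \<Omega> \<Psi> \<rho>"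
    using PI_state_bounds(4)[OF _ assms] min_pos_ev(1) by (intro exI[of _ "real (Suc N) / min_pos_ev ^ N"]) simp
  show "\<exists>C>0. \<forall>\<rho>\<in>PI N. 1 - f_val N \<Omega> \<Psi> \<rho> \<le> C * (1 - p_val N \<Omega> \<Psi> \<rho>)"
    using PI_state_bounds(5)[OF _ assms] beta_lt_1 by (intro exI[of _ "real (Suc N) / (1 - beta_ev \<Omega>)"]) simp
qed (use convex_PI_pairs PI_state_bounds(1-3)[OF _ assms] perfect_PI_state critical_PI_state delta_c_pos in auto)

end

theorem lemma3:
  fixes D N :: nat and \<Omega> :: "complex mat" and \<Psi> :: "complex vec"
  assumes "D \<ge> 2" and "is_unit_vec D \<Psi>" and "verification_operator D \<Omega> \<Psi>" and "N \<ge> 1"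
  shows "convex_on {0..1} (\<lambda>\<delta>. zeta N \<delta> \<Omega> \<Psi>)
       \<and> mono_on {0..1} (\<lambda>\<delta>. zeta N \<delta> \<Omega> \<Psi>)
       \<and> strict_mono_on {delta_c N \<Omega>..1} (\<lambda>\<delta>. zeta N \<delta> \<Omega> \<Psi>)
       \<and> concave_on {0..1} (\<lambda>f. eta N f \<Omega> \<Psi>)
       \<and> strict_mono_on {0..1} (\<lambda>f. eta N f \<Omega> \<Psi>)
       \<and> mono_on {0<..1} (\<lambda>\<delta>. Fid N \<delta> \<Omega> \<Psi>)
       \<and> strict_mono_on {delta_c N \<Omega>..1} (\<lambda>\<delta>. Fid N \<delta> \<Omega> \<Psi>)
       \<and> strict_mono_on {0<..1} (\<lambda>f. Fid' N f \<Omega> \<Psi>)"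
proof -
  interpret verification_setup D \<Omega> \<Psi> using assms by unfold_locales
  obtain M u where "orthonormal D M u" "resolves_identity D M u" "\<forall>j<M. is_eigenfun \<Omega> D (u j)"
    "0 < M" "u 0 = \<psi>"
    by (rule eigenbasis_exists)
  then interpret verification_eigenbasis D \<Omega> \<Psi> M u by unfold_locales auto
  interpret region: pass_fidelity_region "PI N" "p_val N \<Omega> \<Psi>" "f_val N \<Omega> \<Psi>" "delta_c N \<Omega>"
    using PI_pass_fidelity_region assms(4) by simp
  have "zeta N \<delta> \<Omega> \<Psi> = region.min_fidelity \<delta>" "eta N \<phi> \<Omega> \<Psi> = region.max_pass \<phi>"
    "Fid N \<delta> \<Omega> \<Psi> = region.min_cond_fidelity \<delta>" "Fid' N \<phi> \<Omega> \<Psi> = region.min_cond_fidelity' \<phi>" for \<delta> \<phi>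
    unfolding zeta_def eta_def Fid_def Fid'_def region.min_fidelity_def region.max_pass_def
      region.min_cond_fidelity_def region.min_cond_fidelity'_def by (rule refl)+
  then show ?thesis
    using region.convex_min_fidelity region.mono_min_fidelity region.strict_mono_min_fidelity
      region.concave_max_pass region.strict_mono_max_pass region.mono_min_cond_fidelity
      region.strict_mono_min_cond_fidelity region.strict_mono_min_cond_fidelity' by simp
qed

end
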